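(* Let $\mathsf{Y}$ be a finite set, $s:\mathsf{Y}\to\mathbb{R}$, $\mathcal{S}=\sup_{x}|s(x)|$, $q_\theta(x)=\exp(\theta s(x))$, $Z(\theta)=\sum_xq_\theta(x)$, $f(x|\theta)=q_\theta(x)/Z(\theta)$ for $\theta\in\Theta=\mathbb{R}$. Fix observed $y\in\mathsf{Y}$ and the Gaussian prior $\theta\sim\mathcal{N}(0,\sigma_0^2)$, and let $\pi(\theta|y)\propto\pi(\theta)f(y|\theta)$. Let $\Sigma>0$ and let $P_\Sigma$ be the discretized Langevin kernel $\theta'=\theta+\frac\Sigma2\nabla\log\pi(\theta|y)+\eta$, $\eta\sim\mathcal{N}(0,\Sigma)$, where $\nabla\log\pi(\theta|y)=-\theta/\sigma_0^2+s(y)-\mathbb{E}_{x\sim f(\cdot|\theta)}[s(x)]$. For $N\ge1$ let $\hat P_{\Sigma,N}$ be the noisy kernel: draw $y'_1,\dots,y'_N$ i.i.d. from $f(\cdot|\theta)$ and set $\theta'=\theta+\frac\Sigma2\big(-\theta/\sigma_0^2+s(y)-\frac1N\sum_{i=1}^Ns(y'_i)\big)+\eta$, $\eta\sim\mathcal{N}(0,\Sigma)$. If $\Sigma<\sigma_0^2$, then the chain with kernel $P_\Sigma$ is geometrically ergodic with some limiting distribution $\pi_\Sigma$; moreover, for all $N$ large enough the chain with kernel $\hat P_{\Sigma,N}$ is geometrically ergodic with some limiting distribution $\pi_{\Sigma,N}$, and $\|\pi_\Sigma-\pi_{\Sigma,N}\|\to0$ as $N\to\infty$.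
   Context: $\|\mu-\nu\|=\sup_A|\mu(A)-\nu(A)|$ is the total variation distance. $f(\cdot|\theta)$ is a one-parameter Gibbs random field. A chain is geometrically ergodic if it has an invariant distribution to which the $n$-step laws converge in total variation at a geometric rate (possibly depending on the starting point). *)

theory Defs
  imports "HOL-Probability.Probability"
begin

primrec kernel_iter :: "(real \<Rightarrow> real measure) \<Rightarrow> nat \<Rightarrow> real \<Rightarrow> real measure" where
  "kernel_iter K 0 x = return borel x"
| "kernel_iter K (Suc n) x = bind (kernel_iter K n x) K"

definition tv_dist :: "real measure \<Rightarrow> real measure \<Rightarrow> real" where
  "tv_dist \<mu> \<nu> = (SUP A \<in> sets (borel :: real measure). \<bar>measure \<mu> A - measure \<nu> A\<bar>)"

definition geom_ergodic_to :: "(real \<Rightarrow> real measure) \<Rightarrow> real measure \<Rightarrow> bool" where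
  "geom_ergodic_to K \<pi> \<longleftrightarrow>
     prob_space \<pi> \<and> sets \<pi> = sets borel \<and> bind \<pi> K = \<pi> \<and>
     (\<exists>\<rho>::real. 0 \<le> \<rho> \<and> \<rho> < 1 \<and>
        (\<forall>x. \<exists>C::real. \<forall>n. tv_dist (kernel_iter K n x) \<pi> \<le> C * \<rho> ^ n))"

definition geom_ergodic :: "(real \<Rightarrow> real measure) \<Rightarrow> bool" where
  "geom_ergodic K \<longleftrightarrow> (\<exists>\<pi>. geom_ergodic_to K \<pi>)"

definition gibbs_Z :: "'a set \<Rightarrow> ('a \<Rightarrow> real) \<Rightarrow> real \<Rightarrow> real" where
  "gibbs_Z Y s \<theta> = (\<Sum>x\<in>Y. exp (\<theta> * s x))"

definition gibbs_f :: "'a set \<Rightarrow> ('a \<Rightarrow> real) \<Rightarrow> 'a \<Rightarrow> real \<Rightarrow> real" where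
  "gibbs_f Y s x \<theta> = exp (\<theta> * s x) / gibbs_Z Y s \<theta>"

definition gibbs_mean :: "'a set \<Rightarrow> ('a \<Rightarrow> real) \<Rightarrow> real \<Rightarrow> real" where
  "gibbs_mean Y s \<theta> = (\<Sum>x\<in>Y. s x * gibbs_f Y s x \<theta>)"

text \<open>grad log pi(theta|y) = -theta/sigma0^2 + s(y) - E_{f(.|theta)}[s], for the prior N(0, sigma0^2).\<close>
definition grad_log_post :: "'a set \<Rightarrow> ('a \<Rightarrow> real) \<Rightarrow> 'a \<Rightarrow> real \<Rightarrow> real \<Rightarrow> real" where
  "grad_log_post Y s y \<sigma>0 \<theta> = - \<theta> / \<sigma>0\<^sup>2 + s y - gibbs_mean Y s \<theta>"

definition langevin_kernel :: "'a set \<Rightarrow> ('a \<Rightarrow> real) \<Rightarrow> 'a \<Rightarrow> real \<Rightarrow> real \<Rightarrow> real \<Rightarrow> real measure" where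
  "langevin_kernel Y s y \<sigma>0 \<Sigma> \<theta> =
     density lborel (\<lambda>t. ennreal (normal_density
        (\<theta> + \<Sigma> / 2 * grad_log_post Y s y \<sigma>0 \<theta>) (sqrt \<Sigma>) t))"

text \<open>Its law is the finite mixture over all draws ys in Y^N, weighted by prod f(ys i|theta).\<close>
definition noisy_langevin_kernel ::
  "'a set \<Rightarrow> ('a \<Rightarrow> real) \<Rightarrow> 'a \<Rightarrow> real \<Rightarrow> real \<Rightarrow> nat \<Rightarrow> real \<Rightarrow> real measure" where
  "noisy_langevin_kernel Y s y \<sigma>0 \<Sigma> N \<theta> =
     density lborel (\<lambda>t. ennreal
       (\<Sum>ys \<in> PiE {..<N} (\<lambda>_. Y).
          (\<Prod>i<N. gibbs_f Y s (ys i) \<theta>) *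
          normal_density
            (\<theta> + \<Sigma> / 2 * (- \<theta> / \<sigma>0\<^sup>2 + s y - (\<Sum>i<N. s (ys i)) / real N))
            (sqrt \<Sigma>) t))"

end

theory Submission
  imports Defs
begin

text \<open>
  Both chains are Gaussian random walks \<open>\<theta>' \<sim> N(m(\<theta>), \<Sigma>)\<close> whose mean (or every mean of the
  mixture, for the noisy kernel) satisfies \<open>\<bar>m(\<theta>) - a \<theta>\<bar> \<le> D\<close> with
  \<open>a = 1 - \<Sigma> / (2 \<sigma>\<^sub>0\<^sup>2) \<in> [0, 1)\<close>, because the Gibbs mean and the sample means of \<open>s\<close>
  are bounded. Hence \<open>V(\<theta>) = \<theta>\<^sup>2\<close> is a Lyapunov function with rate \<open>(1 + a\<^sup>2) / 2\<close>, and on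
  every sublevel set of \<open>V\<close> the transition densities dominate a fixed Gaussian. Following
  Hairer and Mattingly, one step of the chain then contracts a weighted oscillation seminorm,
  which yields geometric ergodicity with constants that do not depend on \<open>N\<close>.

  The noisy mean differs from the exact one by \<open>\<Sigma> / 2\<close> times the error of a sample mean,
  which is \<open>O(1 / \<surd>N)\<close> in expectation, and shifting the mean of a Gaussian is Lipschitz in
  total variation. So one step of the two chains differs by \<open>\<epsilon>\<^sub>N = O(1 / \<surd>N)\<close>, and comparing
  \<open>n\<close>-step laws started at \<open>0\<close> gives \<open>\<parallel>\<pi>\<^sub>\<Sigma> - \<pi>\<^sub>N\<parallel> \<le> 2 C \<rho>\<^sup>n + n \<epsilon>\<^sub>N\<close> for every \<open>n\<close>.
\<close>

section \<open>Markov kernels given by densities\<close>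

definition kernel_of_density :: "(real \<Rightarrow> real \<Rightarrow> real) \<Rightarrow> real \<Rightarrow> real measure" where
  "kernel_of_density k \<theta> = density lborel (\<lambda>t. ennreal (k \<theta> t))"

definition kernel_op :: "(real \<Rightarrow> real \<Rightarrow> real) \<Rightarrow> (real \<Rightarrow> real) \<Rightarrow> real \<Rightarrow> real" where
  "kernel_op k \<phi> \<theta> = (\<integral>t. k \<theta> t * \<phi> t \<partial>lborel)"

definition bounded_borel :: "real \<Rightarrow> (real \<Rightarrow> real) \<Rightarrow> bool" where
  "bounded_borel B \<phi> \<longleftrightarrow> \<phi> \<in> borel_measurable borel \<and> (\<forall>t. \<bar>\<phi> t\<bar> \<le> B)"

lemma bounded_borel_indicator: "A \<in> sets borel \<Longrightarrow> bounded_borel 1 (indicator A)"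
  by (auto simp: bounded_borel_def)

lemma integrable_mult_bounded_borel:
  assumes "integrable lborel r" "bounded_borel B \<phi>"
  shows "integrable lborel (\<lambda>t. r t * \<phi> t)"
proof (rule Bochner_Integration.integrable_bound[where f="\<lambda>t. B * r t"])
  show "integrable lborel (\<lambda>t. B * r t)" using assms(1) by simp
  have "norm (r x * \<phi> x) \<le> norm (B * r x)" for x
  proof -
    have "\<bar>r x\<bar> * \<bar>\<phi> x\<bar> \<le> \<bar>r x\<bar> * \<bar>B\<bar>"
      using assms(2)
      by (intro mult_left_mono) (auto simp: bounded_borel_def intro: order_trans[OF _ abs_ge_self])
    then show ?thesis by (simp add: abs_mult mult.commute)
  qed
  then show "AE x in lborel. norm (r x * \<phi> x) \<le> norm (B * r x)" by simp
qed (use assms in \<open>auto simp: bounded_borel_def\<close>)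

locale density_kernel =
  fixes k :: "real \<Rightarrow> real \<Rightarrow> real"
  assumes k_measurable_pair[measurable]: "case_prod k \<in> borel_measurable (borel \<Otimes>\<^sub>M borel)"
    and k_nonneg: "\<And>\<theta> t. 0 \<le> k \<theta> t"
    and integrable_k: "\<And>\<theta>. integrable lborel (k \<theta>)"
    and integral_k: "\<And>\<theta>. (\<integral>t. k \<theta> t \<partial>lborel) = 1"
begin

lemma k_measurable_pair_lborel[measurable]: "case_prod k \<in> borel_measurable (borel \<Otimes>\<^sub>M lborel)"
  using k_measurable_pair by (simp add: measurable_def space_pair_measure sets_pair_measure)

lemma k_measurable[measurable]: "k \<theta> \<in> borel_measurable borel"
  by measurable

lemma sets_kernel_of_density[simp]: "sets (kernel_of_density k \<theta>) = sets borel"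
  by (simp add: kernel_of_density_def)

lemma space_kernel_of_density[simp]: "space (kernel_of_density k \<theta>) = UNIV"
  by (simp add: kernel_of_density_def)

lemma prob_space_kernel_of_density: "prob_space (kernel_of_density k \<theta>)"
proof
  have "emeasure (kernel_of_density k \<theta>) (space (kernel_of_density k \<theta>))
      = (\<integral>\<^sup>+t. ennreal (k \<theta> t) \<partial>lborel)"
    by (simp add: kernel_of_density_def emeasure_density)
  also have "\<dots> = ennreal (\<integral>t. k \<theta> t \<partial>lborel)"
    by (rule nn_integral_eq_integral) (auto simp: integrable_k k_nonneg)
  finally show "emeasure (kernel_of_density k \<theta>) (space (kernel_of_density k \<theta>)) = 1"
    by (simp add: integral_k)
qed

lemma emeasure_kernel_of_density_UNIV[simp]: "emeasure (kernel_of_density k \<theta>) UNIV = 1"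
  using prob_space.emeasure_space_1[OF prob_space_kernel_of_density, of \<theta>] by simp

lemma emeasure_kernel_of_density:
  "emeasure (kernel_of_density k \<theta>) A = ennreal (measure (kernel_of_density k \<theta>) A)"
proof -
  interpret prob_space "kernel_of_density k \<theta>" by (rule prob_space_kernel_of_density)
  show ?thesis by (rule emeasure_eq_measure)
qed

lemma measurable_kernel_of_density[measurable]:
  "kernel_of_density k \<in> borel \<rightarrow>\<^sub>M prob_algebra borel"
proof (rule measurable_prob_algebraI)
  show "prob_space (kernel_of_density k x)" for x by (rule prob_space_kernel_of_density)
  show "kernel_of_density k \<in> borel \<rightarrow>\<^sub>M subprob_algebra borel"
  proof (rule measurable_subprob_algebra)
    show "subprob_space (kernel_of_density k a)" for a
      using prob_space_kernel_of_density prob_space_imp_subprob_space by blast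
    fix A :: "real set" assume A: "A \<in> sets borel"
    have "(\<lambda>a. emeasure (kernel_of_density k a) A)
        = (\<lambda>a. \<integral>\<^sup>+t. ennreal (k a t) * indicator A t \<partial>lborel)"
      using A by (simp add: kernel_of_density_def emeasure_density)
    also have "\<dots> \<in> borel_measurable borel"
      using A by measurable
    finally show "(\<lambda>a. emeasure (kernel_of_density k a) A) \<in> borel_measurable borel" .
  qed simp
qed

lemma measurable_kernel_of_density_subprob[measurable]:
  "kernel_of_density k \<in> borel \<rightarrow>\<^sub>M subprob_algebra borel"
  using measurable_kernel_of_density measurable_prob_algebraD by blast

lemma measurable_kernel_op[measurable]:
  assumes [measurable]: "\<phi> \<in> borel_measurable borel"
  shows "kernel_op k \<phi> \<in> borel_measurable borel"
  unfolding kernel_op_def by measurable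

lemma integral_kernel_of_density:
  "\<phi> \<in> borel_measurable borel \<Longrightarrow> (\<integral>t. \<phi> t \<partial>kernel_of_density k \<theta>) = kernel_op k \<phi> \<theta>"
  unfolding kernel_of_density_def kernel_op_def
  by (subst integral_density) (auto simp: k_nonneg)

lemma integrable_k_mult: "bounded_borel B \<phi> \<Longrightarrow> integrable lborel (\<lambda>t. k \<theta> t * \<phi> t)"
  by (rule integrable_mult_bounded_borel[OF integrable_k])

lemma abs_kernel_op_le:
  assumes "bounded_borel B \<phi>" shows "\<bar>kernel_op k \<phi> \<theta>\<bar> \<le> B"
proof -
  have "\<bar>kernel_op k \<phi> \<theta>\<bar> \<le> (\<integral>t. B * k \<theta> t \<partial>lborel)"
    unfolding kernel_op_def
    using assms integrable_k k_nonneg integrable_k_mult[OF assms]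
    by (intro integral_abs_bound_integral)
      (auto simp: bounded_borel_def abs_mult mult.commute[of B] intro!: mult_left_mono)
  also have "\<dots> = B" by (simp add: integral_k)
  finally show ?thesis .
qed

lemma bounded_borel_kernel_op: "bounded_borel B \<phi> \<Longrightarrow> bounded_borel B (kernel_op k \<phi>)"
  using abs_kernel_op_le by (auto simp: bounded_borel_def)

lemma bounded_borel_kernel_op_iter:
  "bounded_borel B \<phi> \<Longrightarrow> bounded_borel B ((kernel_op k ^^ n) \<phi>)"
  by (induction n) (auto intro: bounded_borel_kernel_op)

lemma kernel_op_indicator:
  assumes "A \<in> sets borel"
  shows "kernel_op k (indicator A) \<theta> = measure (kernel_of_density k \<theta>) A"
proof -
  interpret prob_space "kernel_of_density k \<theta>" by (rule prob_space_kernel_of_density)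
  show ?thesis
    using assms by (simp flip: integral_kernel_of_density)
qed

lemma kernel_op_indicator_nonneg_le_1:
  assumes "A \<in> sets borel"
  shows "0 \<le> kernel_op k (indicator A) \<theta>" "kernel_op k (indicator A) \<theta> \<le> 1"
  using kernel_op_indicator[OF assms, of \<theta>] prob_space.prob_le_1[OF prob_space_kernel_of_density]
  by auto

lemma kernel_iter_in_prob_algebra:
  "kernel_iter (kernel_of_density k) n x \<in> space (prob_algebra borel)"
proof (induction n)
  case 0
  then show ?case by (auto simp: space_prob_algebra prob_space_return)
next
  case (Suc n)
  then show ?case
    using prob_space_bind'[OF Suc measurable_kernel_of_density]
      sets_bind'[OF Suc measurable_kernel_of_density]
    by (simp add: space_prob_algebra)
qed

lemma prob_space_kernel_iter: "prob_space (kernel_iter (kernel_of_density k) n x)"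
  and sets_kernel_iter[measurable_cong]:
    "sets (kernel_iter (kernel_of_density k) n x) = sets borel"
  using kernel_iter_in_prob_algebra[of n x] by (auto simp: space_prob_algebra)

lemma space_kernel_iter[simp]: "space (kernel_iter (kernel_of_density k) n x) = UNIV"
  using sets_eq_imp_space_eq[OF sets_kernel_iter] by simp

lemma integral_kernel_iter:
  assumes "bounded_borel B \<psi>"
  shows "(\<integral>t. \<psi> t \<partial>kernel_iter (kernel_of_density k) n x) = (kernel_op k ^^ n) \<psi> x"
  using assms
proof (induction n arbitrary: \<psi>)
  case 0
  then show ?case by (simp add: bounded_borel_def integral_return)
next
  case (Suc n)
  have [measurable]: "\<psi> \<in> borel_measurable borel"
    using Suc.prems by (simp add: bounded_borel_def)
  let ?M = "kernel_iter (kernel_of_density k) n x"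
  interpret M: prob_space ?M by (rule prob_space_kernel_iter)
  have "(\<integral>t. \<psi> t \<partial>kernel_iter (kernel_of_density k) (Suc n) x)
      = (\<integral>\<theta>. (\<integral>t. \<psi> t \<partial>kernel_of_density k \<theta>) \<partial>?M)"
    using Suc.prems
    by (simp, intro integral_bind[where K=borel and B=B and B'=1])
      (auto simp: bounded_borel_def M.finite_measure_axioms intro!: AE_I2)
  also have "\<dots> = (\<integral>\<theta>. kernel_op k \<psi> \<theta> \<partial>?M)"
    by (simp add: integral_kernel_of_density)
  also have "\<dots> = (kernel_op k ^^ Suc n) \<psi> x"
    using Suc.IH[OF bounded_borel_kernel_op[OF Suc.prems]]
    by (simp add: funpow_Suc_right del: funpow.simps)
  finally show ?case .
qed

lemma measure_kernel_iter:
  assumes "A \<in> sets borel"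
  shows "measure (kernel_iter (kernel_of_density k) n x) A = (kernel_op k ^^ n) (indicator A) x"
  using integral_kernel_iter[OF bounded_borel_indicator[OF assms], of n x]
    prob_space.prob_space[OF prob_space_kernel_iter]
  by simp

end

section \<open>Contraction in a weighted oscillation seminorm\<close>

lemma abs_integral_le_quadratic:
  fixes r f :: "real \<Rightarrow> real"
  assumes r_nonneg: "\<And>t. 0 \<le> r t" and r_int: "integrable lborel r"
    and r_moment: "integrable lborel (\<lambda>t. r t * t\<^sup>2)"
    and f_measurable[measurable]: "f \<in> borel_measurable borel"
    and f_le: "\<And>t. \<bar>f t\<bar> \<le> A + C * t\<^sup>2"
  shows "\<bar>\<integral>t. r t * f t \<partial>lborel\<bar> \<le> A * (\<integral>t. r t \<partial>lborel) + C * (\<integral>t. r t * t\<^sup>2 \<partial>lborel)"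
proof -
  have r_measurable[measurable]: "r \<in> borel_measurable borel"
    using r_int by (simp add: borel_measurable_integrable)
  have bound: "\<bar>r t * f t\<bar> \<le> A * r t + C * (r t * t\<^sup>2)" for t
  proof -
    have "\<bar>r t * f t\<bar> = r t * \<bar>f t\<bar>" using r_nonneg[of t] by (simp add: abs_mult)
    also have "\<dots> \<le> r t * (A + C * t\<^sup>2)" by (rule mult_left_mono[OF f_le r_nonneg])
    finally show ?thesis by (simp add: algebra_simps)
  qed
  have dominant: "integrable lborel (\<lambda>t. A * r t + C * (r t * t\<^sup>2))"
    using r_int r_moment by auto
  have "integrable lborel (\<lambda>t. r t * f t)"
    using bound
    by (intro Bochner_Integration.integrable_bound[OF dominant])
      (auto intro!: AE_I2 intro: order_trans[OF _ abs_ge_self])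
  then have "\<bar>\<integral>t. r t * f t \<partial>lborel\<bar> \<le> (\<integral>t. A * r t + C * (r t * t\<^sup>2) \<partial>lborel)"
    using dominant bound by (rule integral_abs_bound_integral)
  also have "\<dots> = A * (\<integral>t. r t \<partial>lborel) + C * (\<integral>t. r t * t\<^sup>2 \<partial>lborel)"
    using r_int r_moment by simp
  finally show ?thesis .
qed

lemma abs_integral_diff_le_osc:
  fixes r1 r2 \<phi> :: "real \<Rightarrow> real"
  assumes r1: "\<And>t. 0 \<le> r1 t" "integrable lborel r1" "integrable lborel (\<lambda>t. r1 t * t\<^sup>2)"
    and r2: "\<And>t. 0 \<le> r2 t" "integrable lborel r2" "integrable lborel (\<lambda>t. r2 t * t\<^sup>2)"
    and mass1: "(\<integral>t. r1 t \<partial>lborel) = m" and mass2: "(\<integral>t. r2 t \<partial>lborel) = m" and "0 < m"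
    and \<phi>: "bounded_borel B \<phi>"
    and osc: "\<And>u v. \<bar>\<phi> u - \<phi> v\<bar> \<le> L * (2 + \<beta> * u\<^sup>2 + \<beta> * v\<^sup>2)"
  shows "\<bar>(\<integral>t. r1 t * \<phi> t \<partial>lborel) - (\<integral>t. r2 t * \<phi> t \<partial>lborel)\<bar>
           \<le> L * (2 * m + \<beta> * (\<integral>t. r1 t * t\<^sup>2 \<partial>lborel) + \<beta> * (\<integral>t. r2 t * t\<^sup>2 \<partial>lborel))"
proof -
  have [measurable]: "\<phi> \<in> borel_measurable borel" using \<phi> by (simp add: bounded_borel_def)
  define I1 where "I1 = (\<integral>t. r1 t * \<phi> t \<partial>lborel)"
  define I2 where "I2 = (\<integral>t. r2 t * \<phi> t \<partial>lborel)"
  define J1 where "J1 = (\<integral>t. r1 t * t\<^sup>2 \<partial>lborel)"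
  define J2 where "J2 = (\<integral>t. r2 t * t\<^sup>2 \<partial>lborel)"
  have int1: "integrable lborel (\<lambda>t. r1 t * \<phi> t)"
    using r1(2) \<phi> by (rule integrable_mult_bounded_borel)
  have int2: "integrable lborel (\<lambda>t. r2 t * \<phi> t)"
    using r2(2) \<phi> by (rule integrable_mult_bounded_borel)
  have inner: "\<bar>m * \<phi> u - I2\<bar> \<le> (L * (2 + \<beta> * u\<^sup>2)) * m + (L * \<beta>) * J2" for u
  proof -
    have "m * \<phi> u - I2 = (\<integral>v. r2 v * (\<phi> u - \<phi> v) \<partial>lborel)"
      using r2(2) int2 mass2 by (simp add: I2_def right_diff_distrib mult.commute)
    also have "\<bar>\<dots>\<bar> \<le> (L * (2 + \<beta> * u\<^sup>2)) * m + (L * \<beta>) * J2"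
      unfolding J2_def mass2[symmetric]
      by (rule abs_integral_le_quadratic[OF r2]) (use osc[of u] in \<open>auto simp: algebra_simps\<close>)
    finally show ?thesis .
  qed
  have "m * I1 - I2 * m = (\<integral>u. r1 u * (m * \<phi> u - I2) \<partial>lborel)"
    using r1(2) int1 mass1 by (simp add: I1_def right_diff_distrib algebra_simps)
  also have "\<bar>\<dots>\<bar> \<le> (L * 2 * m + L * \<beta> * J2) * (\<integral>t. r1 t \<partial>lborel) + (L * \<beta> * m) * J1"
    unfolding J1_def
    by (rule abs_integral_le_quadratic[OF r1]) (use inner in \<open>auto simp: algebra_simps\<close>)
  finally have "\<bar>(I1 - I2) * m\<bar> \<le> L * (2 * m + \<beta> * J1 + \<beta> * J2) * m"
    using mass1 by (simp add: algebra_simps)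
  then show ?thesis
    using \<open>0 < m\<close> unfolding I1_def I2_def J1_def J2_def by (simp add: abs_mult)
qed

locale drift_minorization_kernel = density_kernel +
  fixes \<gamma> b R \<alpha> :: real and \<nu> :: "real \<Rightarrow> real"
  assumes integrable_second_moment: "\<And>\<theta>. integrable lborel (\<lambda>t. k \<theta> t * t\<^sup>2)"
    and drift: "\<And>\<theta>. (\<integral>t. k \<theta> t * t\<^sup>2 \<partial>lborel) \<le> \<gamma> * \<theta>\<^sup>2 + b"
    and drift_rate: "0 \<le> \<gamma>" "\<gamma> < 1" and drift_const: "0 \<le> b"
    and small_set: "0 < R" "2 * b < (1 - \<gamma>) * R"
    and \<nu>_measurable[measurable]: "\<nu> \<in> borel_measurable borel" and \<nu>_nonneg: "\<And>t. 0 \<le> \<nu> t"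
    and integrable_\<nu>: "integrable lborel \<nu>" and integral_\<nu>: "(\<integral>t. \<nu> t \<partial>lborel) = 1"
    and minorization_const: "0 < \<alpha>" "\<alpha> < 1"
    and minorization: "\<And>\<theta> t. \<theta>\<^sup>2 \<le> R \<Longrightarrow> \<alpha> * \<nu> t \<le> k \<theta> t"
begin

definition osc_weight :: real where
  "osc_weight = \<alpha> / (\<gamma> * R + 2 * b + 1)"

text \<open>\<open>weighted_osc L \<phi>\<close> says that \<open>\<phi>\<close> is \<open>L\<close>-Lipschitz for the Hairer--Mattingly metric
  \<open>d(u, v) = 2 + osc_weight * u\<^sup>2 + osc_weight * v\<^sup>2\<close> (for \<open>u \<noteq> v\<close>) built from the
  Lyapunov function \<open>u\<^sup>2\<close>.\<close>
definition weighted_osc :: "real \<Rightarrow> (real \<Rightarrow> real) \<Rightarrow> bool" where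
  "weighted_osc L \<phi> \<longleftrightarrow> (\<forall>u v. \<bar>\<phi> u - \<phi> v\<bar> \<le> L * (2 + osc_weight * u\<^sup>2 + osc_weight * v\<^sup>2))"

definition rate :: real where
  "rate = max ((2 + osc_weight * (\<gamma> + 2 * b / R) * R) / (2 + osc_weight * R)) (1 - \<alpha> / 2)"

definition drift_level :: real where
  "drift_level = b / (1 - \<gamma>)"

lemma osc_weight_pos: "0 < osc_weight"
  unfolding osc_weight_def using minorization_const drift_rate drift_const small_set
  by (intro divide_pos_pos) (auto intro!: add_nonneg_pos)

lemma osc_weight_drift_le: "osc_weight * (\<gamma> * R + 2 * b) \<le> \<alpha>"
proof -
  have denom: "0 < \<gamma> * R + 2 * b + 1"
    using drift_rate drift_const small_set by (auto intro!: add_nonneg_pos)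
  have "osc_weight * (\<gamma> * R + 2 * b) \<le> osc_weight * (\<gamma> * R + 2 * b + 1)"
    using osc_weight_pos by simp
  also have "\<dots> = \<alpha>" unfolding osc_weight_def using denom by simp
  finally show ?thesis .
qed

lemma drift_rate_far: "0 \<le> \<gamma> + 2 * b / R" "\<gamma> + 2 * b / R < 1"
proof -
  show "0 \<le> \<gamma> + 2 * b / R" using drift_rate drift_const small_set by simp
  have "2 * b / R < 1 - \<gamma>" using small_set by (simp add: divide_less_eq mult.commute)
  then show "\<gamma> + 2 * b / R < 1" by simp
qed

lemma rate_pos: "0 < rate"
proof -
  have "0 < (2 + osc_weight * (\<gamma> + 2 * b / R) * R) / (2 + osc_weight * R)"
    using osc_weight_pos drift_rate_far small_set by (intro divide_pos_pos add_pos_nonneg) auto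
  then show ?thesis unfolding rate_def by simp
qed

lemma rate_less_1: "rate < 1"
proof -
  have "osc_weight * (\<gamma> + 2 * b / R) * R < osc_weight * R"
    using osc_weight_pos drift_rate_far small_set by simp
  moreover have "0 < 2 + osc_weight * R" using osc_weight_pos small_set by (simp add: add_pos_pos)
  ultimately show ?thesis unfolding rate_def using minorization_const by simp
qed

lemma drift_level_nonneg: "0 \<le> drift_level"
  unfolding drift_level_def using drift_const drift_rate by simp

text \<open>Outside the small set the drift alone contracts the weight \<open>2 + osc_weight * s\<close>.\<close>
lemma drift_weight_le_rate:
  assumes s: "R \<le> s" and L: "0 \<le> L"
  shows "L * (2 + osc_weight * (\<gamma> * s + 2 * b)) \<le> rate * L * (2 + osc_weight * s)"
proof -
  define g where "g = \<gamma> + 2 * b / R"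
  have "2 * b = (2 * b / R) * R" using small_set by simp
  also have "\<dots> \<le> (2 * b / R) * s" using s drift_const small_set by (intro mult_left_mono) auto
  finally have "\<gamma> * s + 2 * b \<le> g * s" unfolding g_def by (simp add: algebra_simps)
  then have drift_le: "2 + osc_weight * (\<gamma> * s + 2 * b) \<le> 2 + osc_weight * g * s"
    using osc_weight_pos by (simp add: mult_left_mono mult.assoc)
  have denom: "0 < 2 + osc_weight * R" using osc_weight_pos small_set by (simp add: add_pos_pos)
  have "(2 + osc_weight * g * R) * (2 + osc_weight * s) - (2 + osc_weight * g * s) * (2 + osc_weight * R)
     = 2 * osc_weight * (1 - g) * (s - R)" by (simp add: algebra_simps)
  moreover have "0 \<le> 2 * osc_weight * (1 - g) * (s - R)"
    using osc_weight_pos drift_rate_far s unfolding g_def by simp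
  ultimately have "2 + osc_weight * g * s \<le> (2 + osc_weight * g * R) / (2 + osc_weight * R) * (2 + osc_weight * s)"
    using denom by (simp add: field_simps)
  also have "\<dots> \<le> rate * (2 + osc_weight * s)"
    unfolding rate_def g_def using osc_weight_pos s small_set by (intro mult_right_mono) auto
  finally show ?thesis using drift_le L by (simp add: mult_left_mono mult.assoc mult.left_commute)
qed

lemma kernel_op_diff_far:
  assumes \<phi>: "bounded_borel B \<phi>" "weighted_osc L \<phi>" and L: "0 \<le> L"
    and far: "R \<le> x\<^sup>2 + y\<^sup>2"
  shows "\<bar>kernel_op k \<phi> x - kernel_op k \<phi> y\<bar> \<le> rate * L * (2 + osc_weight * x\<^sup>2 + osc_weight * y\<^sup>2)"
proof -
  have "\<bar>kernel_op k \<phi> x - kernel_op k \<phi> y\<bar>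
      \<le> L * (2 * 1 + osc_weight * (\<integral>t. k x t * t\<^sup>2 \<partial>lborel) + osc_weight * (\<integral>t. k y t * t\<^sup>2 \<partial>lborel))"
    unfolding kernel_op_def
    by (rule abs_integral_diff_le_osc[OF k_nonneg integrable_k integrable_second_moment
          k_nonneg integrable_k integrable_second_moment integral_k integral_k _ \<phi>(1)])
      (use \<phi>(2) in \<open>auto simp: weighted_osc_def\<close>)
  also have "\<dots> \<le> L * (2 + osc_weight * (\<gamma> * (x\<^sup>2 + y\<^sup>2) + 2 * b))"
  proof -
    have "(\<integral>t. k x t * t\<^sup>2 \<partial>lborel) + (\<integral>t. k y t * t\<^sup>2 \<partial>lborel) \<le> \<gamma> * (x\<^sup>2 + y\<^sup>2) + 2 * b"
      using drift[of x] drift[of y] by (simp add: algebra_simps)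
    from mult_left_mono[OF this, of osc_weight] show ?thesis
      using osc_weight_pos L by (intro mult_left_mono) (auto simp: algebra_simps)
  qed
  also have "\<dots> \<le> rate * L * (2 + osc_weight * (x\<^sup>2 + y\<^sup>2))"
    by (rule drift_weight_le_rate[OF far L])
  finally show ?thesis by (simp add: algebra_simps)
qed

text \<open>Inside the small set both transition densities share the part \<open>\<alpha> * \<nu>\<close>, which
  cancels; only the residual \<open>k \<theta> - \<alpha> * \<nu>\<close> of mass \<open>1 - \<alpha>\<close> needs to be coupled.\<close>
definition residual :: "real \<Rightarrow> real \<Rightarrow> real" where
  "residual \<theta> t = k \<theta> t - \<alpha> * \<nu> t"

lemma residual_measurable[measurable]: "residual \<theta> \<in> borel_measurable borel"
  unfolding residual_def by measurable

lemma integrable_residual: "integrable lborel (residual \<theta>)"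
  unfolding residual_def[abs_def] using integrable_k integrable_\<nu> by auto

lemma integral_residual: "(\<integral>t. residual \<theta> t \<partial>lborel) = 1 - \<alpha>"
  unfolding residual_def using integrable_k integrable_\<nu> by (simp add: integral_k integral_\<nu>)

lemma kernel_op_eq_residual:
  assumes "bounded_borel B \<phi>"
  shows "kernel_op k \<phi> \<theta> = (\<integral>t. residual \<theta> t * \<phi> t \<partial>lborel) + \<alpha> * (\<integral>t. \<nu> t * \<phi> t \<partial>lborel)"
  using integrable_k_mult[OF assms] integrable_mult_bounded_borel[OF integrable_\<nu> assms]
  by (simp add: kernel_op_def residual_def left_diff_distrib algebra_simps)

context
  fixes \<theta> :: real
  assumes small: "\<theta>\<^sup>2 \<le> R"
begin

lemma residual_nonneg: "0 \<le> residual \<theta> t"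
  unfolding residual_def using minorization[OF small] by simp

lemma residual_second_moment_le: "residual \<theta> t * t\<^sup>2 \<le> k \<theta> t * t\<^sup>2"
  unfolding residual_def using \<nu>_nonneg[of t] minorization_const by (intro mult_right_mono) auto

lemma integrable_residual_second_moment: "integrable lborel (\<lambda>t. residual \<theta> t * t\<^sup>2)"
  using residual_nonneg residual_second_moment_le
  by (intro Bochner_Integration.integrable_bound[OF integrable_second_moment[of \<theta>]])
    (auto intro!: AE_I2 intro: order_trans[OF _ abs_ge_self])

lemma integral_residual_second_moment_le:
  "(\<integral>t. residual \<theta> t * t\<^sup>2 \<partial>lborel) \<le> \<gamma> * \<theta>\<^sup>2 + b"
  using integral_mono[OF integrable_residual_second_moment integrable_second_moment
      residual_second_moment_le] drift[of \<theta>]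
  by linarith

end

lemma kernel_op_diff_near:
  assumes \<phi>: "bounded_borel B \<phi>" "weighted_osc L \<phi>" and L: "0 \<le> L"
    and near: "x\<^sup>2 + y\<^sup>2 < R"
  shows "\<bar>kernel_op k \<phi> x - kernel_op k \<phi> y\<bar> \<le> rate * L * (2 + osc_weight * x\<^sup>2 + osc_weight * y\<^sup>2)"
proof -
  have x: "x\<^sup>2 \<le> R" and y: "y\<^sup>2 \<le> R"
    using near by (auto intro: order_trans[of _ "x\<^sup>2 + y\<^sup>2"])
  have "\<bar>kernel_op k \<phi> x - kernel_op k \<phi> y\<bar>
      = \<bar>(\<integral>t. residual x t * \<phi> t \<partial>lborel) - (\<integral>t. residual y t * \<phi> t \<partial>lborel)\<bar>"
    by (simp add: kernel_op_eq_residual[OF \<phi>(1)])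
  also have "\<dots> \<le> L * (2 * (1 - \<alpha>) + osc_weight * (\<integral>t. residual x t * t\<^sup>2 \<partial>lborel)
                     + osc_weight * (\<integral>t. residual y t * t\<^sup>2 \<partial>lborel))"
    by (rule abs_integral_diff_le_osc[OF residual_nonneg[OF x] integrable_residual
          integrable_residual_second_moment[OF x] residual_nonneg[OF y] integrable_residual
          integrable_residual_second_moment[OF y] integral_residual integral_residual _ \<phi>(1)])
      (use \<phi>(2) minorization_const in \<open>auto simp: weighted_osc_def\<close>)
  also have "\<dots> \<le> L * (2 * (1 - \<alpha>) + osc_weight * (\<gamma> * R + 2 * b))"
  proof -
    have "\<gamma> * x\<^sup>2 + \<gamma> * y\<^sup>2 \<le> \<gamma> * R"
      using near drift_rate by (simp flip: distrib_left add: mult_left_mono)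
    then have "(\<integral>t. residual x t * t\<^sup>2 \<partial>lborel) + (\<integral>t. residual y t * t\<^sup>2 \<partial>lborel)
        \<le> \<gamma> * R + 2 * b"
      using integral_residual_second_moment_le[OF x] integral_residual_second_moment_le[OF y]
      by linarith
    from mult_left_mono[OF this, of osc_weight] show ?thesis
      using osc_weight_pos L by (intro mult_left_mono) (auto simp: algebra_simps)
  qed
  also have "\<dots> \<le> L * (2 * (1 - \<alpha>) + \<alpha>)"
    using osc_weight_drift_le L by (intro mult_left_mono) auto
  also have "\<dots> = (1 - \<alpha> / 2) * L * 2"
    by (simp add: algebra_simps)
  also have "\<dots> \<le> rate * L * (2 + osc_weight * x\<^sup>2 + osc_weight * y\<^sup>2)"
    using L osc_weight_pos minorization_const unfolding rate_def by (intro mult_mono) auto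
  finally show ?thesis .
qed

lemma weighted_osc_kernel_op:
  assumes "bounded_borel B \<phi>" "weighted_osc L \<phi>" "0 \<le> L"
  shows "weighted_osc (rate * L) (kernel_op k \<phi>)"
  using kernel_op_diff_far[OF assms] kernel_op_diff_near[OF assms]
  unfolding weighted_osc_def by (metis linorder_not_le)

lemma weighted_osc_kernel_op_iter:
  assumes "bounded_borel B \<phi>" "weighted_osc L \<phi>" "0 \<le> L"
  shows "weighted_osc (rate ^ n * L) ((kernel_op k ^^ n) \<phi>)"
proof (induction n)
  case 0
  then show ?case using assms by simp
next
  case (Suc n)
  have "weighted_osc (rate * (rate ^ n * L)) (kernel_op k ((kernel_op k ^^ n) \<phi>))"
    by (rule weighted_osc_kernel_op[OF bounded_borel_kernel_op_iter[OF assms(1)] Suc])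
      (use rate_pos assms(3) in simp)
  then show ?case by (simp add: mult.assoc)
qed

lemma weighted_osc_indicator: "weighted_osc (1/2) (indicator A)"
proof -
  have "\<bar>indicator A u - indicator A v :: real\<bar> \<le> 1/2 * (2 + osc_weight * u\<^sup>2 + osc_weight * v\<^sup>2)"
    for u v
  proof -
    have "0 \<le> osc_weight * u\<^sup>2 + osc_weight * v\<^sup>2"
      using osc_weight_pos by (intro add_nonneg_nonneg mult_nonneg_nonneg) auto
    then show ?thesis by (auto simp: indicator_def)
  qed
  then show ?thesis unfolding weighted_osc_def by blast
qed

end

section \<open>Measures that are uniformly close on sets\<close>

lemma integrable_bounded_borel:
  assumes "prob_space M" "sets M = sets borel" "bounded_borel B f"
  shows "integrable M f"
proof -
  interpret prob_space M by fact
  show ?thesis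
    using assms(3) measurable_cong_sets[OF assms(2) refl]
    by (intro integrable_const_bound[where B=B]) (auto simp: bounded_borel_def)
qed

text \<open>A \<open>[0, 1]\<close>-valued function is approximated from below within \<open>1 / K\<close> by the average of
  the indicators of its superlevel sets at heights \<open>j / K\<close>.\<close>
definition staircase :: "nat \<Rightarrow> (real \<Rightarrow> real) \<Rightarrow> real \<Rightarrow> real" where
  "staircase K g x = (\<Sum>j\<in>{1..K}. indicator {y. real j \<le> real K * g y} x) / real K"

lemma card_le_floor:
  fixes t :: real and K :: nat
  assumes "0 \<le> t" "t \<le> real K"
  shows "card {j \<in> {1..K}. real j \<le> t} = nat \<lfloor>t\<rfloor>"
proof -
  have "{j \<in> {1..K}. real j \<le> t} = {1..nat \<lfloor>t\<rfloor>}"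
    using assms by (auto simp: le_floor_iff le_nat_iff)
  then show ?thesis by simp
qed

lemma staircase_bounds:
  assumes "1 \<le> K" "0 \<le> g x" "g x \<le> 1"
  shows "g x - 1 / real K \<le> staircase K g x" "staircase K g x \<le> g x"
proof -
  have K: "0 < real K" using assms(1) by simp
  have "(\<Sum>j\<in>{1..K}. indicator {y. real j \<le> real K * g y} x :: real)
      = real (card {j \<in> {1..K}. real j \<le> real K * g x})"
    by (simp add: indicator_def sum.If_cases Int_def conj_commute)
  also have "\<dots> = real (nat \<lfloor>real K * g x\<rfloor>)"
    using assms by (subst card_le_floor) (auto intro: mult_left_le)
  also have "\<dots> = real_of_int \<lfloor>real K * g x\<rfloor>"
    using assms by simp
  finally have st: "staircase K g x = real_of_int \<lfloor>real K * g x\<rfloor> / real K"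
    by (simp add: staircase_def)
  have "g x - 1 / real K = (real K * g x - 1) / real K"
    using K by (simp add: field_simps)
  also have "\<dots> \<le> real_of_int \<lfloor>real K * g x\<rfloor> / real K"
    using K by (intro divide_right_mono) linarith+
  finally show "g x - 1 / real K \<le> staircase K g x" unfolding st .
  show "staircase K g x \<le> g x"
    unfolding st pos_divide_le_eq[OF K] by (simp add: mult.commute)
qed

lemma integral_staircase:
  assumes M: "prob_space M" "sets M = sets borel" and [measurable]: "g \<in> borel_measurable borel"
  shows "(\<integral>x. staircase K g x \<partial>M) = (\<Sum>j\<in>{1..K}. measure M {y. real j \<le> real K * g y}) / real K"
proof -
  interpret prob_space M by fact
  have sets: "{y. real j \<le> real K * g y} \<in> sets M" for j
    unfolding M(2) by measurable
  have "(\<integral>x. (\<Sum>j\<in>{1..K}. indicator {y. real j \<le> real K * g y} x :: real) \<partial>M)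
      = (\<Sum>j\<in>{1..K}. measure M {y. real j \<le> real K * g y})"
    using sets by (subst Bochner_Integration.integral_sum) (auto simp: emeasure_eq_measure)
  then show ?thesis by (simp add: staircase_def)
qed

lemma staircase_measurable[measurable]:
  assumes [measurable]: "g \<in> borel_measurable borel"
  shows "staircase K g \<in> borel_measurable borel"
  unfolding staircase_def by measurable

lemma abs_integral_minus_staircase_le:
  assumes L: "prob_space L" "sets L = sets borel" and K: "1 \<le> K"
    and [measurable]: "g \<in> borel_measurable borel" and g01: "\<And>x. 0 \<le> g x" "\<And>x. g x \<le> 1"
  shows "\<bar>(\<integral>x. g x \<partial>L) - (\<integral>x. staircase K g x \<partial>L)\<bar> \<le> 1 / real K"
proof -
  interpret prob_space L by fact
  have close: "\<bar>g x - staircase K g x\<bar> \<le> 1 / real K" for x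
    using staircase_bounds[of K g x] K g01(1)[of x] g01(2)[of x] by (simp add: abs_le_iff)
  have int_g: "integrable L g"
    using g01 by (intro integrable_bounded_borel[OF L, of 1]) (auto simp: bounded_borel_def)
  have "1 / real K \<le> 1" using K by simp
  then have "\<bar>staircase K g x\<bar> \<le> 1" for x
    using staircase_bounds[of K g x] K g01(1)[of x] g01(2)[of x] unfolding abs_le_iff by linarith
  then have int_staircase: "integrable L (staircase K g)"
    by (intro integrable_bounded_borel[OF L, of 1]) (auto simp: bounded_borel_def)
  have "\<bar>\<integral>x. g x - staircase K g x \<partial>L\<bar> \<le> (\<integral>x. 1 / real K \<partial>L)"
    using close int_g int_staircase by (intro integral_abs_bound_integral) auto
  then show ?thesis using int_g int_staircase by (simp add: prob_space)
qed

lemma abs_integral_diff_le_setwise: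
  fixes g :: "real \<Rightarrow> real"
  assumes M: "prob_space M" "sets M = sets borel" and N: "prob_space N" "sets N = sets borel"
    and close: "\<And>A. A \<in> sets borel \<Longrightarrow> \<bar>measure M A - measure N A\<bar> \<le> \<delta>"
    and g[measurable]: "g \<in> borel_measurable borel" and g01: "\<And>x. 0 \<le> g x" "\<And>x. g x \<le> 1"
  shows "\<bar>(\<integral>x. g x \<partial>M) - (\<integral>x. g x \<partial>N)\<bar> \<le> \<delta>"
proof (rule field_le_epsilon)
  fix e :: real assume "0 < e"
  obtain K :: nat where "2 / e < real K" using reals_Archimedean2 by blast
  moreover have "0 < 2 / e" using \<open>0 < e\<close> by simp
  ultimately have "0 < real K" by linarith
  then have K: "1 \<le> K" "2 / real K < e"
    using \<open>2 / e < real K\<close> \<open>0 < e\<close> by (auto simp: field_simps)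
  have "\<bar>(\<integral>x. staircase K g x \<partial>M) - (\<integral>x. staircase K g x \<partial>N)\<bar>
      = \<bar>\<Sum>j\<in>{1..K}. measure M {y. real j \<le> real K * g y} - measure N {y. real j \<le> real K * g y}\<bar>
          / real K"
    by (simp add: integral_staircase[OF M g] integral_staircase[OF N g] sum_subtractf
        flip: diff_divide_distrib)
  also have "\<dots> \<le> (\<Sum>j\<in>{1..K}. \<delta>) / real K"
    by (intro divide_right_mono sum_abs[THEN order_trans] sum_mono close) auto
  also have "\<dots> = \<delta>" using K by simp
  finally show "\<bar>(\<integral>x. g x \<partial>M) - (\<integral>x. g x \<partial>N)\<bar> \<le> \<delta> + e"
    using abs_integral_minus_staircase_le[OF M K(1) g g01]
      abs_integral_minus_staircase_le[OF N K(1) g g01] K(2)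
    by linarith
qed

lemma tv_dist_le:
  assumes "\<And>A. A \<in> sets borel \<Longrightarrow> \<bar>measure M A - measure N A\<bar> \<le> \<delta>"
  shows "tv_dist M N \<le> \<delta>"
  unfolding tv_dist_def by (rule cSUP_least) (use assms in auto)

lemma tv_dist_nonneg:
  assumes "prob_space M" "prob_space N"
  shows "0 \<le> tv_dist M N"
proof -
  have "\<bar>measure M A - measure N A\<bar> \<le> 1" for A
    using prob_space.prob_le_1[OF assms(1), of A] prob_space.prob_le_1[OF assms(2), of A]
      measure_nonneg[of M A] measure_nonneg[of N A]
    unfolding abs_le_iff by linarith
  then have "\<bar>measure M {} - measure N {}\<bar> \<le> tv_dist M N"
    unfolding tv_dist_def by (intro cSUP_upper bdd_aboveI2) auto
  then show ?thesis by simp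
qed

locale uniform_setwise_limit =
  fixes M :: "nat \<Rightarrow> real measure" and \<mu> :: "real set \<Rightarrow> real" and c :: "nat \<Rightarrow> real"
  assumes prob_space_M: "\<And>n. prob_space (M n)" and sets_M: "\<And>n. sets (M n) = sets borel"
    and close: "\<And>n A. A \<in> sets borel \<Longrightarrow> \<bar>measure (M n) A - \<mu> A\<bar> \<le> c n"
    and c_tendsto: "c \<longlonglongrightarrow> 0"
begin

lemma tendsto_measure: "A \<in> sets borel \<Longrightarrow> (\<lambda>n. measure (M n) A) \<longlonglongrightarrow> \<mu> A"
  using Lim_null_comparison[OF _ c_tendsto, of "\<lambda>n. measure (M n) A - \<mu> A"] close
  by (simp add: LIM_zero_iff)

lemma \<mu>_nonneg: "A \<in> sets borel \<Longrightarrow> 0 \<le> \<mu> A"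
  by (rule LIMSEQ_le_const[OF tendsto_measure]) auto

lemma \<mu>_UNIV: "\<mu> UNIV = 1"
proof -
  have "(\<lambda>n. measure (M n) UNIV) = (\<lambda>n. 1)"
    using prob_space.prob_space[OF prob_space_M] sets_eq_imp_space_eq[OF sets_M] by simp
  then show ?thesis using tendsto_measure[of UNIV] LIMSEQ_unique[OF _ tendsto_const] by auto
qed

lemma \<mu>_empty: "\<mu> {} = 0"
  using tendsto_measure[of "{}"] LIMSEQ_unique[OF _ tendsto_const] by auto

lemma \<mu>_finite_union:
  fixes A :: "nat \<Rightarrow> real set"
  assumes A: "range A \<subseteq> sets borel" "disjoint_family A"
  shows "\<mu> (\<Union>i<k. A i) = (\<Sum>i<k. \<mu> (A i))"
proof -
  have "measure (M n) (\<Union>i<k. A i) = (\<Sum>i<k. measure (M n) (A i))" for n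
  proof -
    interpret prob_space "M n" by (rule prob_space_M)
    show ?thesis
      using A sets_M by (intro finite_measure_finite_Union) (auto simp: disjoint_family_on_def)
  qed
  then have "(\<lambda>n. measure (M n) (\<Union>i<k. A i)) \<longlonglongrightarrow> (\<Sum>i<k. \<mu> (A i))"
    using A by (simp, intro tendsto_sum tendsto_measure) auto
  moreover have "(\<lambda>n. measure (M n) (\<Union>i<k. A i)) \<longlonglongrightarrow> \<mu> (\<Union>i<k. A i)"
    using A by (intro tendsto_measure) auto
  ultimately show ?thesis by (rule LIMSEQ_unique[rotated])
qed

text \<open>Countable additivity survives the limit because the convergence is uniform in the set:
  the tail of the union is small for a single \<open>M n\<close> with \<open>c n\<close> small.\<close>
lemma \<mu>_sums:
  fixes A :: "nat \<Rightarrow> real set"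
  assumes A: "range A \<subseteq> sets borel" "disjoint_family A"
  shows "(\<lambda>i. \<mu> (A i)) sums \<mu> (\<Union>i. A i)"
  unfolding sums_def LIMSEQ_iff
proof (intro allI impI)
  fix r :: real assume "0 < r"
  define U where "U = (\<Union>i. A i)"
  define U' where "U' j = (\<Union>i<j. A i)" for j
  have sets: "U \<in> sets borel" "U' j \<in> sets borel" for j
    using A unfolding U_def U'_def by auto
  have "eventually (\<lambda>n. c n < r / 4) sequentially"
    using c_tendsto \<open>0 < r\<close> by (intro order_tendstoD) auto
  then obtain n where n: "c n < r / 4" by (auto simp: eventually_sequentially)
  interpret Mn: prob_space "M n" by (rule prob_space_M)
  have "incseq U'" unfolding incseq_def U'_def by (intro allI impI UN_mono) auto
  then have "(\<lambda>j. measure (M n) (U' j)) \<longlonglongrightarrow> measure (M n) (\<Union>j. U' j)"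
    using sets sets_M by (intro Mn.finite_Lim_measure_incseq) auto
  moreover have "(\<Union>j. U' j) = U" unfolding U_def U'_def by auto
  ultimately obtain J where J: "\<And>j. J \<le> j \<Longrightarrow> \<bar>measure (M n) (U' j) - measure (M n) U\<bar> < r / 2"
    using \<open>0 < r\<close> unfolding LIMSEQ_iff by (metis half_gt_zero real_norm_def)
  show "\<exists>J. \<forall>j\<ge>J. norm ((\<Sum>i<j. \<mu> (A i)) - \<mu> (\<Union>i. A i)) < r"
  proof (intro exI allI impI)
    fix j assume "J \<le> j"
    have "\<bar>\<mu> (U' j) - \<mu> U\<bar> < r"
      using J[OF \<open>J \<le> j\<close>] close[OF sets(2), of n j] close[OF sets(1), of n] n by linarith
    then show "norm ((\<Sum>i<j. \<mu> (A i)) - \<mu> (\<Union>i. A i)) < r"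
      using \<mu>_finite_union[OF A, of j] unfolding U_def U'_def by simp
  qed
qed

definition limit_measure :: "real measure" where
  "limit_measure = measure_of UNIV (sets borel) (\<lambda>A. ennreal (\<mu> A))"

lemma sets_limit_measure[simp, measurable_cong]: "sets limit_measure = sets borel"
  unfolding limit_measure_def
  by (simp add: sigma_algebra.sigma_sets_eq sets.sigma_algebra_axioms[of borel, simplified])

lemma emeasure_limit_measure:
  assumes "A \<in> sets borel"
  shows "emeasure limit_measure A = ennreal (\<mu> A)"
  unfolding limit_measure_def
proof (rule emeasure_measure_of_sigma[OF sets.sigma_algebra_axioms[of borel, simplified] _ _ assms])
  show "positive (sets borel) (\<lambda>A. ennreal (\<mu> A))" by (simp add: positive_def \<mu>_empty)
  show "countably_additive (sets borel) (\<lambda>A. ennreal (\<mu> A))"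
    unfolding countably_additive_def
  proof (intro allI impI)
    fix A :: "nat \<Rightarrow> real set" assume A: "range A \<subseteq> sets borel" "disjoint_family A"
    have "(\<Sum>i. ennreal (\<mu> (A i))) = ennreal (\<Sum>i. \<mu> (A i))"
      using A \<mu>_sums[OF A] by (intro suminf_ennreal2 \<mu>_nonneg sums_summable) auto
    then show "(\<Sum>i. ennreal (\<mu> (A i))) = ennreal (\<mu> (\<Union> (range A)))"
      using sums_unique[OF \<mu>_sums[OF A]] by simp
  qed
qed

lemma prob_space_limit_measure: "prob_space limit_measure"
proof
  have "space limit_measure = UNIV" using sets_eq_imp_space_eq[OF sets_limit_measure] by simp
  then show "emeasure limit_measure (space limit_measure) = 1"
    by (simp add: emeasure_limit_measure \<mu>_UNIV)
qed

lemma measure_limit_measure: "A \<in> sets borel \<Longrightarrow> measure limit_measure A = \<mu> A"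
  using emeasure_limit_measure \<mu>_nonneg by (simp add: measure_def)

lemma abs_integral_diff_limit_measure_le:
  assumes "g \<in> borel_measurable borel" "\<And>x. 0 \<le> g x" "\<And>x. g x \<le> 1"
  shows "\<bar>(\<integral>x. g x \<partial>M n) - (\<integral>x. g x \<partial>limit_measure)\<bar> \<le> c n"
  using close assms
  by (intro abs_integral_diff_le_setwise[OF prob_space_M sets_M prob_space_limit_measure
        sets_limit_measure]) (auto simp: measure_limit_measure)

end

section \<open>Invariant measure and geometric ergodicity\<close>

context drift_minorization_kernel
begin

lemma nn_integral_square_kernel_of_density:
  "(\<integral>\<^sup>+t. ennreal (t\<^sup>2) \<partial>kernel_of_density k \<theta>) = ennreal (\<integral>t. k \<theta> t * t\<^sup>2 \<partial>lborel)"
proof -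
  have "(\<integral>\<^sup>+t. ennreal (t\<^sup>2) \<partial>kernel_of_density k \<theta>) = (\<integral>\<^sup>+t. ennreal (k \<theta> t * t\<^sup>2) \<partial>lborel)"
    unfolding kernel_of_density_def by (subst nn_integral_density) (auto simp: ennreal_mult k_nonneg)
  also have "\<dots> = ennreal (\<integral>t. k \<theta> t * t\<^sup>2 \<partial>lborel)"
    by (rule nn_integral_eq_integral) (auto simp: integrable_second_moment k_nonneg)
  finally show ?thesis .
qed

lemma nn_integral_square_kernel_iter_le:
  "(\<integral>\<^sup>+t. ennreal (t\<^sup>2) \<partial>kernel_iter (kernel_of_density k) n x) \<le> ennreal (x\<^sup>2 + drift_level)"
proof (induction n)
  case 0
  show ?case using drift_level_nonneg by (simp add: nn_integral_return ennreal_leI)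
next
  case (Suc n)
  let ?M = "kernel_iter (kernel_of_density k) n x"
  interpret M: prob_space ?M by (rule prob_space_kernel_iter)
  have "(\<integral>\<^sup>+t. ennreal (t\<^sup>2) \<partial>kernel_iter (kernel_of_density k) (Suc n) x)
      = (\<integral>\<^sup>+\<theta>. ennreal (\<integral>t. k \<theta> t * t\<^sup>2 \<partial>lborel) \<partial>?M)"
    by (simp add: nn_integral_bind[where B=borel] nn_integral_square_kernel_of_density)
  also have "\<dots> \<le> (\<integral>\<^sup>+\<theta>. ennreal \<gamma> * ennreal (\<theta>\<^sup>2) + ennreal b \<partial>?M)"
    using drift drift_rate drift_const
    by (intro nn_integral_mono) (simp add: ennreal_leI flip: ennreal_mult ennreal_plus)
  also have "\<dots> = ennreal \<gamma> * (\<integral>\<^sup>+\<theta>. ennreal (\<theta>\<^sup>2) \<partial>?M) + ennreal b"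
    using M.emeasure_space_1 by (simp add: nn_integral_add nn_integral_cmult)
  also have "\<dots> \<le> ennreal \<gamma> * ennreal (x\<^sup>2 + drift_level) + ennreal b"
    by (intro add_mono mult_left_mono Suc.IH) auto
  also have "\<dots> = ennreal (\<gamma> * (x\<^sup>2 + drift_level) + b)"
    using drift_rate drift_const drift_level_nonneg by (simp flip: ennreal_mult ennreal_plus)
  also have "\<dots> \<le> ennreal (x\<^sup>2 + drift_level)"
  proof (rule ennreal_leI)
    have "b = (1 - \<gamma>) * drift_level" unfolding drift_level_def using drift_rate by simp
    moreover have "\<gamma> * x\<^sup>2 \<le> x\<^sup>2" using drift_rate by (simp add: mult_left_le_one_le)
    ultimately show "\<gamma> * (x\<^sup>2 + drift_level) + b \<le> x\<^sup>2 + drift_level" by (simp add: algebra_simps)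
  qed
  finally show ?case .
qed

lemma abs_diff_integral_le_weighted_osc:
  assumes M: "prob_space M" "sets M = sets borel"
    and moment: "(\<integral>\<^sup>+t. ennreal (t\<^sup>2) \<partial>M) \<le> ennreal c" "0 \<le> c"
    and g: "bounded_borel B g" "weighted_osc L g" and L: "0 \<le> L"
  shows "\<bar>g x - (\<integral>t. g t \<partial>M)\<bar> \<le> L * (2 + osc_weight * x\<^sup>2 + osc_weight * c)"
proof -
  interpret M: prob_space M by fact
  have [measurable]: "g \<in> borel_measurable borel" using g(1) by (simp add: bounded_borel_def)
  have int_g: "integrable M g" by (rule integrable_bounded_borel[OF M g(1)])
  have square_measurable: "(\<lambda>t. t\<^sup>2) \<in> borel_measurable M"
    using M(2) by measurable
  have int_square: "integrable M (\<lambda>t. t\<^sup>2)"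
    using moment by (intro integrableI_nonneg[OF square_measurable])
      (auto simp: top.not_eq_extremum intro: le_less_trans)
  have "ennreal (\<integral>t. t\<^sup>2 \<partial>M) \<le> ennreal c"
    using moment int_square by (subst nn_integral_eq_integral[symmetric]) auto
  then have second_moment: "(\<integral>t. t\<^sup>2 \<partial>M) \<le> c" using ennreal_le_iff[OF moment(2)] by blast
  have osc: "\<bar>g x - g t\<bar> \<le> L * (2 + osc_weight * x\<^sup>2) + (L * osc_weight) * t\<^sup>2" for t
    using g(2) unfolding weighted_osc_def by (auto simp: algebra_simps dest: spec[of _ x])
  have "\<bar>g x - (\<integral>t. g t \<partial>M)\<bar> = \<bar>\<integral>t. g x - g t \<partial>M\<bar>"
    using int_g by (simp add: M.prob_space)
  also have "\<dots> \<le> (\<integral>t. L * (2 + osc_weight * x\<^sup>2) + (L * osc_weight) * t\<^sup>2 \<partial>M)"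
    using osc int_g int_square by (intro integral_abs_bound_integral) auto
  also have "\<dots> = L * (2 + osc_weight * x\<^sup>2) + (L * osc_weight) * (\<integral>t. t\<^sup>2 \<partial>M)"
    using int_square by (simp add: M.prob_space)
  also have "\<dots> \<le> L * (2 + osc_weight * x\<^sup>2) + (L * osc_weight) * c"
    using second_moment L osc_weight_pos by (intro add_left_mono mult_left_mono) auto
  finally show ?thesis by (simp add: algebra_simps)
qed

definition ergodicity_const :: "real \<Rightarrow> real" where
  "ergodicity_const x = (2 + osc_weight * x\<^sup>2 + osc_weight * drift_level) / 2"

lemma tendsto_ergodicity_const_rate_power: "(\<lambda>n. ergodicity_const x * rate ^ n) \<longlonglongrightarrow> 0"
  using LIMSEQ_power_zero[of rate] rate_pos rate_less_1 by (auto intro: tendsto_mult_right_zero)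

lemma measure_kernel_iter_cauchy:
  assumes A: "A \<in> sets borel"
  shows "\<bar>measure (kernel_iter (kernel_of_density k) n x) A
          - measure (kernel_iter (kernel_of_density k) (m + n) 0) A\<bar> \<le> ergodicity_const x * rate ^ n"
proof -
  define g where "g = (kernel_op k ^^ n) (indicator A)"
  have g: "bounded_borel 1 g" "weighted_osc (rate ^ n * (1/2)) g"
    unfolding g_def
    by (rule bounded_borel_kernel_op_iter[OF bounded_borel_indicator[OF A]],
        rule weighted_osc_kernel_op_iter[OF bounded_borel_indicator[OF A] weighted_osc_indicator])
      simp
  have "measure (kernel_iter (kernel_of_density k) (m + n) 0) A
      = (\<integral>t. g t \<partial>kernel_iter (kernel_of_density k) m 0)"
    using integral_kernel_iter[OF g(1), of m 0]
    unfolding g_def measure_kernel_iter[OF A] by (simp add: funpow_add)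
  moreover have "\<bar>g x - (\<integral>t. g t \<partial>kernel_iter (kernel_of_density k) m 0)\<bar>
      \<le> rate ^ n * (1/2) * (2 + osc_weight * x\<^sup>2 + osc_weight * drift_level)"
    using nn_integral_square_kernel_iter_le[of m 0] rate_pos
    by (intro abs_diff_integral_le_weighted_osc[OF prob_space_kernel_iter sets_kernel_iter _
          drift_level_nonneg g]) auto
  ultimately show ?thesis
    unfolding ergodicity_const_def g_def measure_kernel_iter[OF A] by (simp add: algebra_simps)
qed

definition stationary_prob :: "real set \<Rightarrow> real" where
  "stationary_prob A = lim (\<lambda>n. measure (kernel_iter (kernel_of_density k) n 0) A)"

lemma tendsto_stationary_prob:
  assumes A: "A \<in> sets borel"
  shows "(\<lambda>n. measure (kernel_iter (kernel_of_density k) n 0) A) \<longlonglongrightarrow> stationary_prob A"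
proof -
  define X where "X n = measure (kernel_iter (kernel_of_density k) n 0) A" for n
  have "Cauchy X"
  proof (rule CauchyI)
    fix e :: real assume "0 < e"
    then have "eventually (\<lambda>n. ergodicity_const 0 * rate ^ n < e / 2) sequentially"
      using order_tendstoD(2)[OF tendsto_ergodicity_const_rate_power, of "e / 2"] by simp
    then obtain M where M: "ergodicity_const 0 * rate ^ M < e / 2"
      by (auto simp: eventually_sequentially)
    have close: "\<bar>X M - X m\<bar> < e / 2" if "M \<le> m" for m
      using measure_kernel_iter_cauchy[OF A, of M 0 "m - M"] M that unfolding X_def by simp
    show "\<exists>M. \<forall>m\<ge>M. \<forall>n\<ge>M. norm (X m - X n) < e"
    proof (intro exI[of _ M] allI impI)
      fix m n assume "M \<le> m" "M \<le> n"
      then have "\<bar>X M - X m\<bar> < e / 2" "\<bar>X M - X n\<bar> < e / 2" using close by auto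
      then show "norm (X m - X n) < e" unfolding real_norm_def abs_less_iff by linarith
    qed
  qed
  then show ?thesis
    unfolding X_def[symmetric] stationary_prob_def
    by (simp add: Cauchy_convergent_iff convergent_LIMSEQ_iff)
qed

lemma abs_measure_kernel_iter_minus_stationary_prob_le:
  assumes A: "A \<in> sets borel"
  shows "\<bar>measure (kernel_iter (kernel_of_density k) n x) A - stationary_prob A\<bar>
          \<le> ergodicity_const x * rate ^ n"
proof (rule LIMSEQ_le_const2)
  show "(\<lambda>m. \<bar>measure (kernel_iter (kernel_of_density k) n x) A
        - measure (kernel_iter (kernel_of_density k) (m + n) 0) A\<bar>)
      \<longlonglongrightarrow> \<bar>measure (kernel_iter (kernel_of_density k) n x) A - stationary_prob A\<bar>"
    by (intro tendsto_intros LIMSEQ_ignore_initial_segment[OF tendsto_stationary_prob[OF A]])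
qed (use measure_kernel_iter_cauchy[OF A] in auto)

sublocale stationary: uniform_setwise_limit "\<lambda>n. kernel_iter (kernel_of_density k) n 0"
    stationary_prob "\<lambda>n. ergodicity_const 0 * rate ^ n"
  by (rule uniform_setwise_limit.intro) (fact prob_space_kernel_iter sets_kernel_iter
      abs_measure_kernel_iter_minus_stationary_prob_le tendsto_ergodicity_const_rate_power)+

abbreviation stationary_measure :: "real measure" where
  "stationary_measure \<equiv> stationary.limit_measure"

lemma prob_space_stationary_measure: "prob_space stationary_measure"
  by (rule stationary.prob_space_limit_measure)

lemma integral_kernel_op_indicator_stationary_measure:
  assumes A: "A \<in> sets borel"
  shows "(\<integral>\<theta>. kernel_op k (indicator A) \<theta> \<partial>stationary_measure) = stationary_prob A"
proof -
  define g where "g = kernel_op k (indicator A)"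
  have [measurable]: "g \<in> borel_measurable borel"
    unfolding g_def using A by measurable
  have "(\<integral>t. g t \<partial>kernel_iter (kernel_of_density k) n 0)
      = measure (kernel_iter (kernel_of_density k) (Suc n) 0) A" for n
    unfolding g_def measure_kernel_iter[OF A]
      integral_kernel_iter[OF bounded_borel_kernel_op[OF bounded_borel_indicator[OF A]]]
    by (simp only: funpow_Suc_right comp_def)
  then have "(\<lambda>n. \<integral>t. g t \<partial>kernel_iter (kernel_of_density k) n 0) \<longlonglongrightarrow> stationary_prob A"
    using LIMSEQ_Suc[OF tendsto_stationary_prob[OF A]] by simp
  moreover have "(\<lambda>n. \<integral>t. g t \<partial>kernel_iter (kernel_of_density k) n 0)
      \<longlonglongrightarrow> (\<integral>\<theta>. g \<theta> \<partial>stationary_measure)"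
    using stationary.abs_integral_diff_limit_measure_le[of g]
      kernel_op_indicator_nonneg_le_1[OF A, folded g_def]
    by (intro Lim_null_comparison[OF _ tendsto_ergodicity_const_rate_power[of 0], THEN LIM_zero_cancel])
      auto
  ultimately show ?thesis unfolding g_def by (rule LIMSEQ_unique[rotated])
qed

lemma stationary_measure_invariant: "bind stationary_measure (kernel_of_density k) = stationary_measure"
proof (rule measure_eqI)
  interpret \<pi>: prob_space stationary_measure by (rule prob_space_stationary_measure)
  show sets: "sets (bind stationary_measure (kernel_of_density k)) = sets stationary_measure"
    using \<pi>.not_empty by (subst sets_bind[where N=borel]) auto
  fix A assume "A \<in> sets (bind stationary_measure (kernel_of_density k))"
  then have A: "A \<in> sets borel" using sets by simp
  have [measurable]: "kernel_op k (indicator A) \<in> borel_measurable borel"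
    using A by measurable
  have "emeasure (bind stationary_measure (kernel_of_density k)) A
      = (\<integral>\<^sup>+\<theta>. emeasure (kernel_of_density k \<theta>) A \<partial>stationary_measure)"
    using A \<pi>.not_empty by (intro emeasure_bind[where N=borel]) auto
  also have "\<dots> = (\<integral>\<^sup>+\<theta>. ennreal (kernel_op k (indicator A) \<theta>) \<partial>stationary_measure)"
    using A by (intro nn_integral_cong) (simp add: kernel_op_indicator emeasure_kernel_of_density)
  also have "\<dots> = ennreal (\<integral>\<theta>. kernel_op k (indicator A) \<theta> \<partial>stationary_measure)"
    using kernel_op_indicator_nonneg_le_1[OF A]
    by (intro nn_integral_eq_integral \<pi>.integrable_const_bound[where B=1]) auto
  also have "\<dots> = emeasure stationary_measure A"
    by (simp add: integral_kernel_op_indicator_stationary_measure[OF A]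
        stationary.emeasure_limit_measure[OF A])
  finally show "emeasure (bind stationary_measure (kernel_of_density k)) A
      = emeasure stationary_measure A" .
qed

lemma abs_measure_kernel_iter_minus_stationary_le:
  "A \<in> sets borel \<Longrightarrow> \<bar>measure (kernel_iter (kernel_of_density k) n x) A - measure stationary_measure A\<bar>
     \<le> ergodicity_const x * rate ^ n"
  by (simp add: stationary.measure_limit_measure abs_measure_kernel_iter_minus_stationary_prob_le)

theorem geom_ergodic_to_stationary_measure:
  "geom_ergodic_to (kernel_of_density k) stationary_measure"
proof -
  have "tv_dist (kernel_iter (kernel_of_density k) n x) stationary_measure
      \<le> ergodicity_const x * rate ^ n" for n x
    by (intro tv_dist_le abs_measure_kernel_iter_minus_stationary_le)
  then have "\<forall>x. \<exists>C. \<forall>n. tv_dist (kernel_iter (kernel_of_density k) n x) stationary_measure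
      \<le> C * rate ^ n"
    by blast
  then show ?thesis
    unfolding geom_ergodic_to_def
    using prob_space_stationary_measure stationary_measure_invariant rate_pos rate_less_1
    by (intro conjI exI[of _ rate]) auto
qed

end

section \<open>Gaussian mixture kernels\<close>

definition gaussian_mixture ::
  "'j set \<Rightarrow> ('j \<Rightarrow> real \<Rightarrow> real) \<Rightarrow> ('j \<Rightarrow> real \<Rightarrow> real) \<Rightarrow> real \<Rightarrow> real \<Rightarrow> real \<Rightarrow> real" where
  "gaussian_mixture J w m S \<theta> t = (\<Sum>j\<in>J. w j \<theta> * normal_density (m j \<theta>) (sqrt S) t)"

lemma has_bochner_integral_normal_density_square:
  assumes "0 < \<sigma>"
  shows "has_bochner_integral lborel (\<lambda>t. normal_density \<mu> \<sigma> t * t\<^sup>2) (\<sigma>\<^sup>2 + \<mu>\<^sup>2)"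
proof -
  have "has_bochner_integral lborel (\<lambda>t. normal_density \<mu> \<sigma> t * (t - \<mu>) ^ 2
      + 2 * \<mu> * (normal_density \<mu> \<sigma> t * t) - \<mu>\<^sup>2 * normal_density \<mu> \<sigma> t) (\<sigma>\<^sup>2 + 2 * \<mu> * \<mu> - \<mu>\<^sup>2 * 1)"
    using normal_moment_even[OF assms, where k=1 and \<mu>=\<mu>] normal_moment_nz_1[OF assms]
      integral_normal_density[OF assms] integrable_normal_density[OF assms]
    by (intro has_bochner_integral_diff has_bochner_integral_add has_bochner_integral_mult_right)
      (auto simp: power2_eq_square has_bochner_integral_iff)
  then show ?thesis by (simp add: power2_eq_square algebra_simps)
qed

lemma normal_density_minorization:
  assumes S: "0 < S" and \<mu>: "\<bar>\<mu>\<bar> \<le> M"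
  shows "exp (- M\<^sup>2 / S) / 2 * normal_density 0 (sqrt (S / 2)) t \<le> normal_density \<mu> (sqrt S) t"
proof -
  have "(t - \<mu>)\<^sup>2 \<le> 2 * t\<^sup>2 + 2 * M\<^sup>2"
  proof -
    have "\<mu>\<^sup>2 \<le> M\<^sup>2" using power_mono[OF \<mu> abs_ge_zero, of 2] by simp
    moreover have "0 \<le> (t + \<mu>)\<^sup>2" by simp
    ultimately show ?thesis by (simp add: power2_eq_square algebra_simps)
  qed
  then have "(t - \<mu>)\<^sup>2 / (2 * S) \<le> (2 * t\<^sup>2 + 2 * M\<^sup>2) / (2 * S)"
    using S by (intro divide_right_mono) auto
  moreover have "(2 * t\<^sup>2 + 2 * M\<^sup>2) / (2 * S) = M\<^sup>2 / S + t\<^sup>2 / S"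
    using S by (simp add: field_simps)
  ultimately have "- M\<^sup>2 / S + - t\<^sup>2 / S \<le> - (t - \<mu>)\<^sup>2 / (2 * S)"
    by simp
  then have exp_le: "exp (- M\<^sup>2 / S) * exp (- t\<^sup>2 / S) \<le> exp (- (t - \<mu>)\<^sup>2 / (2 * S))"
    by (simp flip: exp_add)
  have "sqrt (2 * pi * S) \<le> sqrt (4 * pi * S)" using S by (intro real_sqrt_le_mono) simp
  also have "sqrt (4 * pi * S) = 2 * sqrt (pi * S)" by (simp add: real_sqrt_mult)
  finally have const_le: "1 / 2 * (1 / sqrt (pi * S)) \<le> 1 / sqrt (2 * pi * S)"
    using S by (simp add: field_simps)
  have "exp (- M\<^sup>2 / S) / 2 * normal_density 0 (sqrt (S / 2)) t
      = (1 / 2 * (1 / sqrt (pi * S))) * (exp (- M\<^sup>2 / S) * exp (- t\<^sup>2 / S))"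
    using S by (simp add: normal_density_def)
  also have "\<dots> \<le> (1 / sqrt (2 * pi * S)) * exp (- (t - \<mu>)\<^sup>2 / (2 * S))"
    using S by (intro mult_mono const_le exp_le) auto
  also have "\<dots> = normal_density \<mu> (sqrt S) t" using S by (simp add: normal_density_def)
  finally show ?thesis .
qed

locale gaussian_mixture_family =
  fixes J :: "'j set" and w m :: "'j \<Rightarrow> real \<Rightarrow> real" and S :: real
  assumes finite_J: "finite J" and w_nonneg: "\<And>j \<theta>. j \<in> J \<Longrightarrow> 0 \<le> w j \<theta>"
    and sum_w: "\<And>\<theta>. (\<Sum>j\<in>J. w j \<theta>) = 1"
    and w_measurable[measurable]: "\<And>j. w j \<in> borel_measurable borel"
    and m_measurable[measurable]: "\<And>j. m j \<in> borel_measurable borel"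
    and S_pos: "0 < S"
begin

lemma has_bochner_integral_gaussian_mixture:
  "has_bochner_integral lborel (gaussian_mixture J w m S \<theta>) 1"
proof -
  have "has_bochner_integral lborel (gaussian_mixture J w m S \<theta>) (\<Sum>j\<in>J. w j \<theta> * 1)"
    unfolding gaussian_mixture_def[abs_def]
    using integral_normal_density integrable_normal_density S_pos
    by (intro has_bochner_integral_sum has_bochner_integral_mult_right)
      (auto simp: has_bochner_integral_iff)
  then show ?thesis by (simp add: sum_w)
qed

lemma has_bochner_integral_gaussian_mixture_square:
  "has_bochner_integral lborel (\<lambda>t. gaussian_mixture J w m S \<theta> t * t\<^sup>2)
     (\<Sum>j\<in>J. w j \<theta> * (S + (m j \<theta>)\<^sup>2))"
proof -
  have "has_bochner_integral lborel
      (\<lambda>t. \<Sum>j\<in>J. w j \<theta> * (normal_density (m j \<theta>) (sqrt S) t * t\<^sup>2)) (\<Sum>j\<in>J. w j \<theta> * (S + (m j \<theta>)\<^sup>2))"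
    using has_bochner_integral_normal_density_square[of "sqrt S"] S_pos
    by (intro has_bochner_integral_sum has_bochner_integral_mult_right) auto
  then show ?thesis
    by (simp add: gaussian_mixture_def sum_distrib_right mult.assoc)
qed

lemma density_kernel_gaussian_mixture: "density_kernel (gaussian_mixture J w m S)"
proof
  have "case_prod (gaussian_mixture J w m S) = (\<lambda>x. \<Sum>j\<in>J. w j (fst x) *
      (1 / sqrt (2 * pi * (sqrt S)\<^sup>2) * exp (- (snd x - m j (fst x))\<^sup>2 / (2 * (sqrt S)\<^sup>2))))"
    by (auto simp: gaussian_mixture_def normal_density_def fun_eq_iff)
  also have "\<dots> \<in> borel_measurable (borel \<Otimes>\<^sub>M borel)"
    by (intro borel_measurable_sum) measurable
  finally show "case_prod (gaussian_mixture J w m S) \<in> borel_measurable (borel \<Otimes>\<^sub>M borel)" .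
  show "0 \<le> gaussian_mixture J w m S \<theta> t" for \<theta> t
    using w_nonneg by (simp add: gaussian_mixture_def sum_nonneg)
  show "integrable lborel (gaussian_mixture J w m S \<theta>)" for \<theta>
    using has_bochner_integral_gaussian_mixture by (rule integrable.intros)
  show "(\<integral>t. gaussian_mixture J w m S \<theta> t \<partial>lborel) = 1" for \<theta>
    using has_bochner_integral_gaussian_mixture by (rule has_bochner_integral_integral_eq)
qed

end

text \<open>Young's inequality \<open>2 a \<theta> e \<le> \<epsilon> \<theta>\<^sup>2 + a\<^sup>2 e\<^sup>2 / \<epsilon>\<close> with \<open>\<epsilon> = (1 - a\<^sup>2) / 2\<close>.\<close>
lemma power2_le_of_abs_diff_mult_le:
  fixes a D x \<theta> :: real
  assumes a: "0 \<le> a" "a < 1" and x: "\<bar>x - a * \<theta>\<bar> \<le> D"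
  shows "x\<^sup>2 \<le> (1 + a\<^sup>2) / 2 * \<theta>\<^sup>2 + D\<^sup>2 + 2 * a\<^sup>2 * D\<^sup>2 / (1 - a\<^sup>2)"
proof -
  define e where "e = x - a * \<theta>"
  define \<epsilon> where "\<epsilon> = (1 - a\<^sup>2) / 2"
  have a2: "a\<^sup>2 < 1" using mult_left_mono[of a 1 a] a by (simp add: power2_eq_square)
  have \<epsilon>: "0 < \<epsilon>" unfolding \<epsilon>_def using a2 by simp
  have "0 \<le> (\<epsilon> * \<theta> - a * e)\<^sup>2 / \<epsilon>" using \<epsilon> by simp
  then have young: "2 * a * \<theta> * e \<le> \<epsilon> * \<theta>\<^sup>2 + a\<^sup>2 * e\<^sup>2 / \<epsilon>"
    using \<epsilon> by (simp add: power2_eq_square field_simps)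
  have e2: "e\<^sup>2 \<le> D\<^sup>2" unfolding e_def using power_mono[OF x abs_ge_zero, of 2] by simp
  then have "a\<^sup>2 * e\<^sup>2 / \<epsilon> \<le> a\<^sup>2 * D\<^sup>2 / \<epsilon>" using \<epsilon> by (intro divide_right_mono mult_left_mono) auto
  have "x\<^sup>2 = a\<^sup>2 * \<theta>\<^sup>2 + 2 * a * \<theta> * e + e\<^sup>2"
    unfolding e_def by (simp add: power2_eq_square algebra_simps)
  also have "\<dots> \<le> a\<^sup>2 * \<theta>\<^sup>2 + (\<epsilon> * \<theta>\<^sup>2 + a\<^sup>2 * D\<^sup>2 / \<epsilon>) + D\<^sup>2"
    using young e2 \<open>a\<^sup>2 * e\<^sup>2 / \<epsilon> \<le> a\<^sup>2 * D\<^sup>2 / \<epsilon>\<close> by linarith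
  also have "\<dots> = (1 + a\<^sup>2) / 2 * \<theta>\<^sup>2 + D\<^sup>2 + 2 * a\<^sup>2 * D\<^sup>2 / (1 - a\<^sup>2)"
    unfolding \<epsilon>_def using a2 by (simp add: field_simps)
  finally show ?thesis .
qed

text \<open>The constants depend only on \<open>a\<close>, \<open>D\<close> and \<open>S\<close>, so the exact kernel and all noisy
  kernels share them.\<close>
locale gaussian_mixture_bounds =
  fixes a D S :: real
  assumes a: "0 \<le> a" "a < 1" and D: "0 \<le> D" and S: "0 < S"
begin

definition mix_drift_rate :: real where
  "mix_drift_rate = (1 + a\<^sup>2) / 2"

definition mix_drift_const :: real where
  "mix_drift_const = S + D\<^sup>2 + 2 * a\<^sup>2 * D\<^sup>2 / (1 - a\<^sup>2)"

definition mix_small_set :: real where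
  "mix_small_set = 4 * mix_drift_const / (1 - a\<^sup>2) + 1"

definition mix_minorization_const :: real where
  "mix_minorization_const = exp (- (a * sqrt mix_small_set + D)\<^sup>2 / S) / 2"

definition mix_minorization_density :: "real \<Rightarrow> real" where
  "mix_minorization_density = normal_density 0 (sqrt (S / 2))"

lemma a2_less_1: "a\<^sup>2 < 1"
  using mult_left_mono[of a 1 a] a by (simp add: power2_eq_square)

lemma mix_drift_const_nonneg: "0 \<le> mix_drift_const"
  unfolding mix_drift_const_def using S a2_less_1 by (intro add_nonneg_nonneg divide_nonneg_nonneg) auto

lemma mix_drift_rate: "0 \<le> mix_drift_rate" "mix_drift_rate < 1"
  unfolding mix_drift_rate_def using a2_less_1 by auto

lemma mix_small_set_pos: "0 < mix_small_set"
  unfolding mix_small_set_def using mix_drift_const_nonneg a2_less_1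
  by (intro add_nonneg_pos divide_nonneg_pos) auto

lemma mix_drift_const_less: "2 * mix_drift_const < (1 - mix_drift_rate) * mix_small_set"
proof -
  have "(1 - mix_drift_rate) * mix_small_set = 2 * mix_drift_const + (1 - a\<^sup>2) / 2"
    unfolding mix_drift_rate_def mix_small_set_def using a2_less_1 by (simp add: field_simps)
  then show ?thesis using a2_less_1 by simp
qed

lemma mix_minorization_const: "0 < mix_minorization_const" "mix_minorization_const < 1"
proof -
  have "exp (- (a * sqrt mix_small_set + D)\<^sup>2 / S) \<le> 1"
    using S by (simp add: divide_nonpos_pos)
  then show "mix_minorization_const < 1"
    unfolding mix_minorization_const_def by linarith
  show "0 < mix_minorization_const"
    unfolding mix_minorization_const_def by simp
qed

lemma mix_minorization_density:
  "mix_minorization_density \<in> borel_measurable borel" "0 \<le> mix_minorization_density t"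
  "integrable lborel mix_minorization_density" "(\<integral>t. mix_minorization_density t \<partial>lborel) = 1"
  using S integrable_normal_density[of "sqrt (S / 2)"] integral_normal_density[of "sqrt (S / 2)"]
  unfolding mix_minorization_density_def by simp_all

context
  fixes J :: "'j set" and w m :: "'j \<Rightarrow> real \<Rightarrow> real"
  assumes family: "gaussian_mixture_family J w m S"
    and near: "\<And>j \<theta>. j \<in> J \<Longrightarrow> \<bar>m j \<theta> - a * \<theta>\<bar> \<le> D"
begin

interpretation gaussian_mixture_family J w m S by (fact family)

lemma integral_gaussian_mixture_square_le:
  "(\<integral>t. gaussian_mixture J w m S \<theta> t * t\<^sup>2 \<partial>lborel) \<le> mix_drift_rate * \<theta>\<^sup>2 + mix_drift_const"
proof -
  have "(\<integral>t. gaussian_mixture J w m S \<theta> t * t\<^sup>2 \<partial>lborel) = (\<Sum>j\<in>J. w j \<theta> * (S + (m j \<theta>)\<^sup>2))"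
    using has_bochner_integral_gaussian_mixture_square by (rule has_bochner_integral_integral_eq)
  also have "\<dots> \<le> (\<Sum>j\<in>J. w j \<theta> * (mix_drift_rate * \<theta>\<^sup>2 + mix_drift_const))"
  proof (intro sum_mono mult_left_mono w_nonneg)
    fix j assume "j \<in> J"
    show "S + (m j \<theta>)\<^sup>2 \<le> mix_drift_rate * \<theta>\<^sup>2 + mix_drift_const"
      using power2_le_of_abs_diff_mult_le[OF a near[OF \<open>j \<in> J\<close>, of \<theta>]]
      unfolding mix_drift_rate_def mix_drift_const_def by linarith
  qed
  finally show ?thesis by (simp add: sum_w flip: sum_distrib_right)
qed

lemma gaussian_mixture_minorization:
  assumes "\<theta>\<^sup>2 \<le> mix_small_set"
  shows "mix_minorization_const * mix_minorization_density t \<le> gaussian_mixture J w m S \<theta> t"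
proof -
  have "\<bar>\<theta>\<bar> \<le> sqrt mix_small_set" using assms real_sqrt_le_mono by fastforce
  then have "\<bar>a * \<theta>\<bar> \<le> a * sqrt mix_small_set"
    using a by (simp add: abs_mult mult_left_mono)
  then have mean_bound: "\<bar>m j \<theta>\<bar> \<le> a * sqrt mix_small_set + D" if "j \<in> J" for j
    using near[OF that, of \<theta>] by linarith
  have "mix_minorization_const * mix_minorization_density t
      = (\<Sum>j\<in>J. w j \<theta> * (mix_minorization_const * mix_minorization_density t))"
    by (simp add: sum_w flip: sum_distrib_right)
  also have "\<dots> \<le> (\<Sum>j\<in>J. w j \<theta> * normal_density (m j \<theta>) (sqrt S) t)"
    using normal_density_minorization[OF S mean_bound] w_nonneg
    unfolding mix_minorization_const_def mix_minorization_density_def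
    by (intro sum_mono mult_left_mono) auto
  finally show ?thesis by (simp add: gaussian_mixture_def)
qed

lemma drift_minorization_kernel_gaussian_mixture:
  "drift_minorization_kernel (gaussian_mixture J w m S) mix_drift_rate mix_drift_const
    mix_small_set mix_minorization_const mix_minorization_density"
proof (intro drift_minorization_kernel.intro drift_minorization_kernel_axioms.intro)
  show "density_kernel (gaussian_mixture J w m S)" by (rule density_kernel_gaussian_mixture)
  show "integrable lborel (\<lambda>t. gaussian_mixture J w m S \<theta> t * t\<^sup>2)" for \<theta>
    using has_bochner_integral_gaussian_mixture_square by (rule integrable.intros)
qed (use integral_gaussian_mixture_square_le mix_drift_rate mix_drift_const_nonneg mix_small_set_pos
    mix_drift_const_less mix_minorization_density mix_minorization_const
    gaussian_mixture_minorization in auto)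

end

end

section \<open>Perturbation of the drift\<close>

lemma abs_exp_diff_le: "\<bar>exp x - exp y\<bar> \<le> \<bar>x - y\<bar> * max (exp x) (exp y)"
  for x y :: real
proof -
  have one_sided: "exp u - exp v \<le> (u - v) * exp u" for u v :: real
  proof -
    have "exp u * (1 + (v - u)) \<le> exp u * exp (v - u)"
      by (intro mult_left_mono exp_ge_add_one_self) auto
    then show ?thesis by (simp add: algebra_simps flip: exp_add)
  qed
  show ?thesis
    using one_sided[of x y] one_sided[of y x]
    by (cases "y \<le> x") (auto simp: abs_if intro: order_trans[OF _ mult_mono])
qed

context
  fixes S \<Delta> \<delta> :: real
  assumes S: "0 < S" and \<delta>: "\<bar>\<delta>\<bar> \<le> \<Delta>"
begin

lemma abs_gaussian_exponent_shift_le: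
  "\<bar>- (u - \<delta>)\<^sup>2 / (2 * S) - - u\<^sup>2 / (2 * S)\<bar> \<le> \<bar>\<delta>\<bar> * (\<Delta> + 2 * \<bar>u\<bar>) / (2 * S)"
proof -
  have "u\<^sup>2 - (u - \<delta>)\<^sup>2 = \<delta> * (2 * u - \<delta>)" by (simp add: power2_eq_square algebra_simps)
  moreover have "- (u - \<delta>)\<^sup>2 / (2 * S) - - u\<^sup>2 / (2 * S) = (u\<^sup>2 - (u - \<delta>)\<^sup>2) / (2 * S)"
    by (simp add: diff_divide_distrib)
  ultimately have "- (u - \<delta>)\<^sup>2 / (2 * S) - - u\<^sup>2 / (2 * S) = \<delta> * (2 * u - \<delta>) / (2 * S)"
    by simp
  then have "\<bar>- (u - \<delta>)\<^sup>2 / (2 * S) - - u\<^sup>2 / (2 * S)\<bar> = \<bar>\<delta>\<bar> * \<bar>2 * u - \<delta>\<bar> / (2 * S)"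
    using S by (simp add: abs_mult)
  also have "\<dots> \<le> \<bar>\<delta>\<bar> * (\<Delta> + 2 * \<bar>u\<bar>) / (2 * S)"
    using S \<delta> by (intro divide_right_mono mult_left_mono) auto
  finally show ?thesis .
qed

lemma max_exp_gaussian_exponent_le:
  "max (exp (- (u - \<delta>)\<^sup>2 / (2 * S))) (exp (- u\<^sup>2 / (2 * S)))
    \<le> exp (\<Delta>\<^sup>2 / (2 * S)) * exp (- u\<^sup>2 / (4 * S))"
proof -
  have "\<delta>\<^sup>2 \<le> \<Delta>\<^sup>2" using power_mono[OF \<delta> abs_ge_zero, of 2] by simp
  moreover have "0 \<le> (u - 2 * \<delta>)\<^sup>2" by simp
  moreover have "(u - \<delta>)\<^sup>2 = (u - 2 * \<delta>)\<^sup>2 / 2 + u\<^sup>2 / 2 - \<delta>\<^sup>2"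
    by (simp add: power2_eq_square field_simps)
  ultimately have "- (u - \<delta>)\<^sup>2 \<le> \<Delta>\<^sup>2 - u\<^sup>2 / 2" by linarith
  then have "- (u - \<delta>)\<^sup>2 / (2 * S) \<le> (\<Delta>\<^sup>2 - u\<^sup>2 / 2) / (2 * S)"
    using S by (intro divide_right_mono) auto
  also have "\<dots> = \<Delta>\<^sup>2 / (2 * S) + - u\<^sup>2 / (4 * S)"
    using S by (simp add: field_simps)
  finally have "- (u - \<delta>)\<^sup>2 / (2 * S) \<le> \<Delta>\<^sup>2 / (2 * S) + - u\<^sup>2 / (4 * S)" .
  moreover have "- u\<^sup>2 / (2 * S) \<le> - u\<^sup>2 / (4 * S)" using S by (simp add: field_simps)
  moreover have "0 \<le> \<Delta>\<^sup>2 / (2 * S)" using S by simp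
  ultimately show ?thesis by (simp flip: exp_add)
qed

text \<open>The bound is a Gaussian of doubled variance times a linear weight, so it stays integrable
  after integrating in \<open>t\<close>.\<close>
lemma abs_normal_density_shift_le:
  "\<bar>normal_density (\<mu> + \<delta>) (sqrt S) t - normal_density \<mu> (sqrt S) t\<bar>
    \<le> \<bar>\<delta>\<bar> * (exp (\<Delta>\<^sup>2 / (2 * S)) / S) * ((\<Delta> + 2 * \<bar>t - \<mu>\<bar>) * normal_density \<mu> (sqrt (2 * S)) t)"
proof -
  define u where "u = t - \<mu>"
  define x where "x = - (u - \<delta>)\<^sup>2 / (2 * S)"
  define y where "y = - u\<^sup>2 / (2 * S)"
  define c where "c = 1 / sqrt (2 * pi * S)"
  have c: "0 < c" unfolding c_def using S by simp
  have "sqrt (4 * pi * S) = sqrt 2 * sqrt (2 * pi * S)" by (simp flip: real_sqrt_mult)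
  also have "\<dots> \<le> 2 * sqrt (2 * pi * S)"
    using S by (intro mult_right_mono) (auto simp: real_sqrt_le_iff[of 2 4, simplified])
  finally have c_le: "c / 2 \<le> 1 / sqrt (4 * pi * S)" unfolding c_def using S by (simp add: field_simps)
  have "normal_density (\<mu> + \<delta>) (sqrt S) t = c * exp x"
    unfolding c_def x_def u_def normal_density_def using S by (simp add: algebra_simps)
  moreover have "normal_density \<mu> (sqrt S) t = c * exp y"
    unfolding c_def y_def u_def normal_density_def using S by simp
  ultimately have "\<bar>normal_density (\<mu> + \<delta>) (sqrt S) t - normal_density \<mu> (sqrt S) t\<bar>
      = c * \<bar>exp x - exp y\<bar>"
    using c by (simp add: abs_mult flip: right_diff_distrib)
  also have "\<dots> \<le> c * ((\<bar>\<delta>\<bar> * (\<Delta> + 2 * \<bar>u\<bar>) / (2 * S)) * (exp (\<Delta>\<^sup>2 / (2 * S)) * exp (- u\<^sup>2 / (4 * S))))"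
  proof -
    have "0 \<le> \<Delta>" using \<delta> abs_ge_zero order_trans by blast
    then have "0 \<le> \<bar>\<delta>\<bar> * (\<Delta> + 2 * \<bar>u\<bar>) / (2 * S)"
      using S by (intro divide_nonneg_pos mult_nonneg_nonneg) auto
    moreover have "0 \<le> max (exp x) (exp y)" by (simp add: le_max_iff_disj)
    ultimately show ?thesis
      using c abs_gaussian_exponent_shift_le[of u] max_exp_gaussian_exponent_le[of u]
      unfolding x_def y_def
      by (intro mult_left_mono order_trans[OF abs_exp_diff_le] mult_mono) auto
  qed
  also have "\<dots> = \<bar>\<delta>\<bar> * (exp (\<Delta>\<^sup>2 / (2 * S)) / S) * ((\<Delta> + 2 * \<bar>u\<bar>) * (c / 2 * exp (- u\<^sup>2 / (4 * S))))"
    using S by (simp add: field_simps)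
  also have "\<dots> \<le> \<bar>\<delta>\<bar> * (exp (\<Delta>\<^sup>2 / (2 * S)) / S) * ((\<Delta> + 2 * \<bar>u\<bar>) * (1 / sqrt (4 * pi * S) * exp (- u\<^sup>2 / (4 * S))))"
    using S \<delta> c_le by (intro mult_left_mono mult_right_mono) auto
  also have "\<dots> = \<bar>\<delta>\<bar> * (exp (\<Delta>\<^sup>2 / (2 * S)) / S) * ((\<Delta> + 2 * \<bar>t - \<mu>\<bar>) * normal_density \<mu> (sqrt (2 * S)) t)"
    unfolding u_def normal_density_def using S by simp
  finally show ?thesis .
qed

end

definition normal_shift_const :: "real \<Rightarrow> real \<Rightarrow> real" where
  "normal_shift_const \<Delta> S = exp (\<Delta>\<^sup>2 / (2 * S)) / S * (\<Delta> + 2 * sqrt (2 * S) * sqrt (2 / pi))"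

lemma normal_shift_const_nonneg: "0 < S \<Longrightarrow> 0 \<le> \<Delta> \<Longrightarrow> 0 \<le> normal_shift_const \<Delta> S"
  unfolding normal_shift_const_def
  by (intro mult_nonneg_nonneg divide_nonneg_pos add_nonneg_nonneg) auto

lemma abs_integral_normal_density_shift_le:
  assumes S: "0 < S" and \<Delta>: "\<bar>\<mu>1 - \<mu>2\<bar> \<le> \<Delta>" and \<psi>: "bounded_borel 1 \<psi>"
  shows "\<bar>(\<integral>t. normal_density \<mu>1 (sqrt S) t * \<psi> t \<partial>lborel)
      - (\<integral>t. normal_density \<mu>2 (sqrt S) t * \<psi> t \<partial>lborel)\<bar> \<le> normal_shift_const \<Delta> S * \<bar>\<mu>1 - \<mu>2\<bar>"
proof -
  have sqrt_S: "0 < sqrt S" "0 < sqrt (2 * S)" using S by simp_all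
  define q where "q = normal_density \<mu>2 (sqrt (2 * S))"
  define K where "K = \<bar>\<mu>1 - \<mu>2\<bar> * (exp (\<Delta>\<^sup>2 / (2 * S)) / S)"
  define G where "G t = K * (\<Delta> * q t + 2 * (q t * \<bar>t - \<mu>2\<bar> ^ 1))" for t
  have int: "integrable lborel (\<lambda>t. normal_density \<mu> (sqrt S) t * \<psi> t)" for \<mu>
    by (rule integrable_mult_bounded_borel[OF integrable_normal_density[OF sqrt_S(1)] \<psi>])
  have int_q: "integrable lborel q" "integrable lborel (\<lambda>t. q t * \<bar>t - \<mu>2\<bar> ^ 1)"
    unfolding q_def by (rule integrable_normal_density[OF sqrt_S(2)],
        rule integrable_normal_moment_abs[OF sqrt_S(2)])
  have "\<bar>(normal_density \<mu>1 (sqrt S) t - normal_density \<mu>2 (sqrt S) t) * \<psi> t\<bar> \<le> G t" for t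
  proof -
    have "\<bar>(normal_density \<mu>1 (sqrt S) t - normal_density \<mu>2 (sqrt S) t) * \<psi> t\<bar>
        \<le> \<bar>normal_density (\<mu>2 + (\<mu>1 - \<mu>2)) (sqrt S) t - normal_density \<mu>2 (sqrt S) t\<bar>"
      using \<psi> by (simp add: abs_mult bounded_borel_def mult_left_le)
    also have "\<dots> \<le> G t"
      using abs_normal_density_shift_le[OF S \<Delta>, of \<mu>2 t]
      unfolding G_def K_def q_def by (simp add: algebra_simps)
    finally show ?thesis .
  qed
  then have "\<bar>\<integral>t. (normal_density \<mu>1 (sqrt S) t - normal_density \<mu>2 (sqrt S) t) * \<psi> t \<partial>lborel\<bar>
      \<le> (\<integral>t. G t \<partial>lborel)"
    using int int_q unfolding G_def
    by (intro integral_abs_bound_integral) (auto simp: left_diff_distrib)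
  also have "(\<integral>t. G t \<partial>lborel) = K * (\<Delta> + 2 * (sqrt (2 * S) * sqrt (2 / pi)))"
    using int_q integral_normal_density[OF sqrt_S(2)]
      integral_normal_moment_abs_odd[OF sqrt_S(2), where k=0 and \<mu>=\<mu>2]
    unfolding G_def q_def by simp
  also have "\<dots> = exp (\<Delta>\<^sup>2 / (2 * S)) / S * (\<Delta> + 2 * sqrt (2 * S) * sqrt (2 / pi)) * \<bar>\<mu>1 - \<mu>2\<bar>"
    unfolding K_def by (simp add: algebra_simps add_divide_distrib)
  finally show ?thesis
    using int unfolding normal_shift_const_def by (simp add: left_diff_distrib)
qed

lemma abs_integral_mixture_minus_normal_le:
  fixes J :: "'j set" and w m :: "'j \<Rightarrow> real"
  assumes "finite J" and w: "\<And>j. j \<in> J \<Longrightarrow> 0 \<le> w j" "(\<Sum>j\<in>J. w j) = 1"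
    and \<psi>: "bounded_borel 1 \<psi>" and S: "0 < S"
    and lipschitz: "\<And>j. j \<in> J \<Longrightarrow>
      \<bar>(\<integral>t. normal_density (m j) (sqrt S) t * \<psi> t \<partial>lborel)
        - (\<integral>t. normal_density \<mu> (sqrt S) t * \<psi> t \<partial>lborel)\<bar> \<le> C * \<bar>m j - \<mu>\<bar>"
  shows "\<bar>(\<integral>t. (\<Sum>j\<in>J. w j * normal_density (m j) (sqrt S) t) * \<psi> t \<partial>lborel)
          - (\<integral>t. normal_density \<mu> (sqrt S) t * \<psi> t \<partial>lborel)\<bar>
      \<le> C * (\<Sum>j\<in>J. w j * \<bar>m j - \<mu>\<bar>)"
proof -
  define I where "I \<mu> = (\<integral>t. normal_density \<mu> (sqrt S) t * \<psi> t \<partial>lborel)" for \<mu>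
  have int: "integrable lborel (\<lambda>t. normal_density \<mu> (sqrt S) t * \<psi> t)" for \<mu>
    using S by (intro integrable_mult_bounded_borel[OF integrable_normal_density \<psi>]) auto
  have "(\<integral>t. (\<Sum>j\<in>J. w j * normal_density (m j) (sqrt S) t) * \<psi> t \<partial>lborel)
      = (\<integral>t. (\<Sum>j\<in>J. w j * (normal_density (m j) (sqrt S) t * \<psi> t)) \<partial>lborel)"
    by (simp add: sum_distrib_right mult.assoc)
  also have "\<dots> = (\<Sum>j\<in>J. w j * I (m j))"
    unfolding I_def using int by (subst Bochner_Integration.integral_sum) auto
  finally have "(\<integral>t. (\<Sum>j\<in>J. w j * normal_density (m j) (sqrt S) t) * \<psi> t \<partial>lborel)
      - (\<integral>t. normal_density \<mu> (sqrt S) t * \<psi> t \<partial>lborel) = (\<Sum>j\<in>J. w j * (I (m j) - I \<mu>))"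
    using w(2) unfolding I_def
    by (simp add: right_diff_distrib sum_subtractf flip: sum_distrib_right)
  also have "\<bar>\<dots>\<bar> \<le> (\<Sum>j\<in>J. w j * (C * \<bar>m j - \<mu>\<bar>))"
    using w(1) lipschitz unfolding I_def
    by (intro sum_abs[THEN order_trans] sum_mono) (auto simp: abs_mult mult_left_mono)
  finally show ?thesis by (simp add: sum_distrib_left algebra_simps)
qed

lemma abs_kernel_op_iter_diff_le:
  assumes "density_kernel k1" "density_kernel k2"
    and one_step: "\<And>\<psi> \<theta>. bounded_borel 1 \<psi> \<Longrightarrow> \<bar>kernel_op k1 \<psi> \<theta> - kernel_op k2 \<psi> \<theta>\<bar> \<le> \<epsilon>"
    and \<psi>: "bounded_borel 1 \<psi>"
  shows "\<bar>(kernel_op k1 ^^ n) \<psi> x - (kernel_op k2 ^^ n) \<psi> x\<bar> \<le> real n * \<epsilon>"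
proof (induction n arbitrary: x)
  case 0
  then show ?case by simp
next
  case (Suc n)
  interpret K1: density_kernel k1 by fact
  interpret K2: density_kernel k2 by fact
  define g1 where "g1 = (kernel_op k1 ^^ n) \<psi>"
  define g2 where "g2 = (kernel_op k2 ^^ n) \<psi>"
  have g: "bounded_borel 1 g1" "bounded_borel 1 g2"
    unfolding g1_def g2_def using K1.bounded_borel_kernel_op_iter K2.bounded_borel_kernel_op_iter \<psi>
    by auto
  have bounded_diff: "bounded_borel (real n * \<epsilon>) (\<lambda>t. g1 t - g2 t)"
    using g Suc.IH unfolding bounded_borel_def g1_def g2_def by auto
  have "kernel_op k1 g1 x - kernel_op k1 g2 x = kernel_op k1 (\<lambda>t. g1 t - g2 t) x"
    unfolding kernel_op_def using K1.integrable_k_mult[OF g(1)] K1.integrable_k_mult[OF g(2)]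
    by (simp add: right_diff_distrib)
  then have "\<bar>kernel_op k1 g1 x - kernel_op k1 g2 x\<bar> \<le> real n * \<epsilon>"
    using K1.abs_kernel_op_le[OF bounded_diff] by simp
  moreover have "\<bar>kernel_op k1 g2 x - kernel_op k2 g2 x\<bar> \<le> \<epsilon>" by (rule one_step[OF g(2)])
  ultimately have "\<bar>kernel_op k1 g1 x - kernel_op k2 g2 x\<bar> \<le> real n * \<epsilon> + \<epsilon>" by linarith
  then show ?case unfolding g1_def g2_def by (simp add: algebra_simps)
qed

context drift_minorization_kernel
begin

text \<open>A kernel with the same drift and minorization constants as \<open>k\<close> shares \<open>rate\<close> and
  \<open>ergodicity_const\<close>, so both chains forget their start at the same geometric speed, while
  one step of the two chains differs by at most \<open>\<epsilon>\<close>.\<close>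
lemma tv_dist_stationary_measure_le:
  assumes k': "drift_minorization_kernel k' \<gamma> b R \<alpha> \<nu>"
    and one_step: "\<And>\<psi> \<theta>. bounded_borel 1 \<psi> \<Longrightarrow> \<bar>kernel_op k' \<psi> \<theta> - kernel_op k \<psi> \<theta>\<bar> \<le> \<epsilon>"
  shows "tv_dist stationary_measure (drift_minorization_kernel.stationary_measure k')
    \<le> 2 * ergodicity_const 0 * rate ^ n + real n * \<epsilon>"
proof (rule tv_dist_le)
  interpret K': drift_minorization_kernel k' \<gamma> b R \<alpha> \<nu> by (fact k')
  fix A :: "real set" assume A: "A \<in> sets borel"
  note one_step_iter = abs_kernel_op_iter_diff_le[OF K'.density_kernel_axioms density_kernel_axioms
      one_step bounded_borel_indicator[OF A], of n 0]
  note k_close = abs_measure_kernel_iter_minus_stationary_le[OF A, of n 0,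
      unfolded measure_kernel_iter[OF A]]
  note k'_close = K'.abs_measure_kernel_iter_minus_stationary_le[OF A, of n 0,
      unfolded K'.measure_kernel_iter[OF A]]
  from one_step_iter k_close k'_close
  show "\<bar>measure stationary_measure A - measure K'.stationary_measure A\<bar>
      \<le> 2 * ergodicity_const 0 * rate ^ n + real n * \<epsilon>"
    unfolding abs_le_iff by linarith
qed

end

lemma tendsto_zero_of_le_power_plus_linear:
  fixes d \<epsilon> a :: "nat \<Rightarrow> real"
  assumes d_nonneg: "\<And>N. 0 \<le> d N" and d_le: "\<And>N n. N0 \<le> N \<Longrightarrow> d N \<le> a n + real n * \<epsilon> N"
    and a: "a \<longlonglongrightarrow> 0" and \<epsilon>: "\<epsilon> \<longlonglongrightarrow> 0"
  shows "d \<longlonglongrightarrow> 0"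
proof (rule order_tendstoI)
  show "eventually (\<lambda>N. r < d N) sequentially" if "r < 0" for r
    using that d_nonneg by (intro always_eventually allI) (auto intro: less_le_trans)
  fix r :: real assume "0 < r"
  then obtain n where n: "a n < r / 2"
    using order_tendstoD(2)[OF a, of "r / 2"] by (auto simp: eventually_sequentially)
  have "(\<lambda>N. real n * \<epsilon> N) \<longlonglongrightarrow> 0" by (rule tendsto_mult_right_zero[OF \<epsilon>])
  then have "eventually (\<lambda>N. real n * \<epsilon> N < r / 2) sequentially"
    using \<open>0 < r\<close> by (intro order_tendstoD) auto
  moreover have "eventually (\<lambda>N. N0 \<le> N) sequentially" by (rule eventually_ge_at_top)
  ultimately show "eventually (\<lambda>N. d N < r) sequentially"
  proof eventually_elim
    case (elim N)
    with d_le[of N n] n show ?case by linarith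
  qed
qed

lemma tendsto_const_div_sqrt: "(\<lambda>N. C / sqrt (real N)) \<longlonglongrightarrow> 0"
  by (intro tendsto_divide_0[OF tendsto_const] filterlim_at_top_imp_at_infinity
      filterlim_compose[OF sqrt_at_top filterlim_real_sequentially])

section \<open>The Gibbs model and its sample means\<close>

definition samples :: "'a set \<Rightarrow> nat \<Rightarrow> (nat \<Rightarrow> 'a) set" where
  "samples Y N = PiE {..<N} (\<lambda>_. Y)"

definition sample_prob :: "'a set \<Rightarrow> ('a \<Rightarrow> real) \<Rightarrow> nat \<Rightarrow> (nat \<Rightarrow> 'a) \<Rightarrow> real \<Rightarrow> real" where
  "sample_prob Y s N ys \<theta> = (\<Prod>i<N. gibbs_f Y s (ys i) \<theta>)"

lemma abs_le_square_div_plus: "0 < c \<Longrightarrow> \<bar>z\<bar> \<le> z\<^sup>2 / (2 * c) + c / 2"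
  for z c :: real
proof -
  assume "0 < c"
  have "0 \<le> (\<bar>z\<bar> - c)\<^sup>2" by simp
  then have "2 * c * \<bar>z\<bar> \<le> z\<^sup>2 + c\<^sup>2" by (simp add: power2_eq_square algebra_simps)
  then show ?thesis using \<open>0 < c\<close> by (simp add: field_simps power2_eq_square)
qed

locale gibbs_model =
  fixes Y :: "'a set" and s :: "'a \<Rightarrow> real"
  assumes finite_Y: "finite Y" and Y_nonempty: "Y \<noteq> {}"
begin

lemma gibbs_Z_pos: "0 < gibbs_Z Y s \<theta>"
  unfolding gibbs_Z_def using finite_Y Y_nonempty by (intro sum_pos) auto

lemma gibbs_f_nonneg: "0 \<le> gibbs_f Y s x \<theta>"
  unfolding gibbs_f_def using gibbs_Z_pos[of \<theta>] by simp

lemma sum_gibbs_f: "(\<Sum>x\<in>Y. gibbs_f Y s x \<theta>) = 1"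
  using gibbs_Z_pos[of \<theta>] unfolding gibbs_f_def gibbs_Z_def by (simp flip: sum_divide_distrib)

lemma gibbs_f_measurable[measurable]: "(\<lambda>\<theta>. gibbs_f Y s x \<theta>) \<in> borel_measurable borel"
  unfolding gibbs_f_def gibbs_Z_def by measurable

lemma gibbs_mean_measurable[measurable]: "gibbs_mean Y s \<in> borel_measurable borel"
  unfolding gibbs_mean_def by measurable

definition s_bound :: real where
  "s_bound = (\<Sum>x\<in>Y. \<bar>s x\<bar>)"

lemma abs_s_le_s_bound: "x \<in> Y \<Longrightarrow> \<bar>s x\<bar> \<le> s_bound"
  using finite_Y unfolding s_bound_def by (intro member_le_sum) auto

lemma s_bound_nonneg: "0 \<le> s_bound"
  unfolding s_bound_def by (simp add: sum_nonneg)

lemma abs_gibbs_mean_le: "\<bar>gibbs_mean Y s \<theta>\<bar> \<le> s_bound"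
proof -
  have "\<bar>gibbs_mean Y s \<theta>\<bar> \<le> (\<Sum>x\<in>Y. s_bound * gibbs_f Y s x \<theta>)"
    unfolding gibbs_mean_def using abs_s_le_s_bound gibbs_f_nonneg
    by (intro sum_abs[THEN order_trans] sum_mono) (simp add: abs_mult mult_right_mono)
  also have "\<dots> = s_bound" by (simp add: sum_gibbs_f flip: sum_distrib_left)
  finally show ?thesis .
qed

lemma abs_sample_mean_le:
  assumes "ys \<in> samples Y N"
  shows "\<bar>(\<Sum>i<N. s (ys i)) / real N\<bar> \<le> s_bound"
proof (cases "N = 0")
  case False
  have "\<bar>\<Sum>i<N. s (ys i)\<bar> \<le> (\<Sum>i<N. s_bound)"
    using assms abs_s_le_s_bound
    by (intro sum_abs[THEN order_trans] sum_mono) (auto simp: samples_def PiE_def Pi_def)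
  with False show ?thesis by (simp add: divide_le_eq mult.commute)
qed (simp add: s_bound_nonneg)

lemma sample_prob_nonneg: "0 \<le> sample_prob Y s N ys \<theta>"
  unfolding sample_prob_def by (intro prod_nonneg) (simp add: gibbs_f_nonneg)

lemma sample_prob_measurable[measurable]: "sample_prob Y s N ys \<in> borel_measurable borel"
  unfolding sample_prob_def[abs_def] by measurable

lemma finite_samples: "finite (samples Y N)"
  unfolding samples_def using finite_Y by (simp add: finite_PiE)

lemma sum_sample_prob: "(\<Sum>ys\<in>samples Y N. sample_prob Y s N ys \<theta>) = 1"
  using prod_sum_PiE[where A="{..<N}" and B="\<lambda>_. Y" and f="\<lambda>_ x. gibbs_f Y s x \<theta>"] finite_Y
  by (simp add: samples_def sample_prob_def sum_gibbs_f)

lemma sum_sample_prob_mult: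
  fixes h :: "'a \<Rightarrow> real"
  assumes "i < N" "j < N"
  shows "(\<Sum>ys\<in>samples Y N. sample_prob Y s N ys \<theta> * (h (ys i) * h (ys j)))
       = (\<Prod>l<N. \<Sum>x\<in>Y. gibbs_f Y s x \<theta> * (if l = i then h x else 1) * (if l = j then h x else 1))"
proof -
  have "(\<Prod>l<N. (if l = i then h (ys l) else 1)) = h (ys i)"
    and "(\<Prod>l<N. (if l = j then h (ys l) else 1)) = h (ys j)" for ys :: "nat \<Rightarrow> 'a"
    using assms by (simp_all add: prod.delta)
  then have "(\<Prod>l<N. gibbs_f Y s (ys l) \<theta> * (if l = i then h (ys l) else 1) * (if l = j then h (ys l) else 1))
      = sample_prob Y s N ys \<theta> * (h (ys i) * h (ys j))" for ys
    by (simp add: sample_prob_def prod.distrib)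
  then show ?thesis
    using prod_sum_PiE[where A="{..<N}" and B="\<lambda>_. Y"
        and f="\<lambda>l x. gibbs_f Y s x \<theta> * (if l = i then h x else 1) * (if l = j then h x else 1)"]
      finite_Y
    by (simp add: samples_def)
qed

definition gibbs_var :: "real \<Rightarrow> real" where
  "gibbs_var \<theta> = (\<Sum>x\<in>Y. gibbs_f Y s x \<theta> * (s x - gibbs_mean Y s \<theta>)\<^sup>2)"

lemma gibbs_var_le: "gibbs_var \<theta> \<le> 4 * s_bound\<^sup>2"
proof -
  have "(s x - gibbs_mean Y s \<theta>)\<^sup>2 \<le> 4 * s_bound\<^sup>2" if "x \<in> Y" for x
  proof -
    have "\<bar>s x - gibbs_mean Y s \<theta>\<bar> \<le> 2 * s_bound"
      using abs_s_le_s_bound[OF that] abs_gibbs_mean_le[of \<theta>] by linarith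
    from power_mono[OF this abs_ge_zero, of 2] show ?thesis by (simp add: power_mult_distrib)
  qed
  then have "gibbs_var \<theta> \<le> (\<Sum>x\<in>Y. gibbs_f Y s x \<theta> * (4 * s_bound\<^sup>2))"
    unfolding gibbs_var_def by (intro sum_mono mult_left_mono gibbs_f_nonneg)
  also have "\<dots> = 4 * s_bound\<^sup>2" by (simp add: sum_gibbs_f flip: sum_distrib_right)
  finally show ?thesis .
qed

lemma sum_sample_prob_centered_sum_square:
  "(\<Sum>ys\<in>samples Y N. sample_prob Y s N ys \<theta> * (\<Sum>i<N. s (ys i) - gibbs_mean Y s \<theta>)\<^sup>2)
     = real N * gibbs_var \<theta>"
proof -
  define h where "h x = s x - gibbs_mean Y s \<theta>" for x
  define P where "P ys = sample_prob Y s N ys \<theta>" for ys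
  have "(\<Sum>x\<in>Y. gibbs_f Y s x \<theta> * h x)
      = (\<Sum>x\<in>Y. s x * gibbs_f Y s x \<theta>) - gibbs_mean Y s \<theta> * (\<Sum>x\<in>Y. gibbs_f Y s x \<theta>)"
    unfolding h_def by (simp add: right_diff_distrib sum_subtractf sum_distrib_left mult.commute)
  then have centered: "(\<Sum>x\<in>Y. gibbs_f Y s x \<theta> * h x) = 0"
    using sum_gibbs_f[of \<theta>] unfolding gibbs_mean_def by simp
  have cross: "(\<Sum>ys\<in>samples Y N. P ys * (h (ys i) * h (ys j))) = (if i = j then gibbs_var \<theta> else 0)"
    if "i < N" "j < N" for i j
  proof (cases "i = j")
    case True
    have "(\<Prod>l<N. \<Sum>x\<in>Y. gibbs_f Y s x \<theta> * (if l = i then h x else 1) * (if l = j then h x else 1))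
        = (\<Prod>l<N. if l = i then gibbs_var \<theta> else 1)"
      using True sum_gibbs_f unfolding gibbs_var_def h_def
      by (intro prod.cong) (auto simp: power2_eq_square mult.assoc)
    then show ?thesis using True that sum_sample_prob_mult[OF that, of \<theta> h]
      by (simp add: P_def prod.delta)
  next
    case False
    have "(\<Prod>l<N. \<Sum>x\<in>Y. gibbs_f Y s x \<theta> * (if l = i then h x else 1) * (if l = j then h x else 1)) = 0"
      using that False centered by (intro prod_zero bexI[of _ i]) auto
    then show ?thesis using False sum_sample_prob_mult[OF that, of \<theta> h] by (simp add: P_def)
  qed
  have "(\<Sum>ys\<in>samples Y N. P ys * (\<Sum>i<N. h (ys i))\<^sup>2)
      = (\<Sum>ys\<in>samples Y N. \<Sum>i<N. \<Sum>j<N. P ys * (h (ys i) * h (ys j)))"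
    unfolding power2_eq_square sum_product by (simp add: sum_distrib_left)
  also have "\<dots> = (\<Sum>i<N. \<Sum>ys\<in>samples Y N. \<Sum>j<N. P ys * (h (ys i) * h (ys j)))"
    by (rule sum.swap)
  also have "\<dots> = (\<Sum>i<N. \<Sum>j<N. \<Sum>ys\<in>samples Y N. P ys * (h (ys i) * h (ys j)))"
    by (rule sum.cong[OF refl], rule sum.swap)
  also have "\<dots> = real N * gibbs_var \<theta>"
    using cross by simp
  finally show ?thesis unfolding P_def h_def .
qed

text \<open>The mean absolute error of the sample mean is \<open>O(1 / \<surd>N)\<close>; the bound
  \<open>\<bar>z\<bar> \<le> z\<^sup>2 / (2 c) + c / 2\<close> with \<open>c = 1 / \<surd>N\<close> replaces Jensen's inequality.\<close>
lemma sum_sample_prob_abs_sample_mean_error_le: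
  assumes "1 \<le> N"
  shows "(\<Sum>ys\<in>samples Y N. sample_prob Y s N ys \<theta> * \<bar>(\<Sum>i<N. s (ys i)) / real N - gibbs_mean Y s \<theta>\<bar>)
     \<le> (4 * s_bound\<^sup>2 + 1) / (2 * sqrt (real N))"
proof -
  define P where "P ys = sample_prob Y s N ys \<theta>" for ys
  define T where "T ys = (\<Sum>i<N. s (ys i) - gibbs_mean Y s \<theta>)" for ys
  define c where "c = 1 / sqrt (real N)"
  have N: "0 < real N" using assms by simp
  have c: "0 < c" unfolding c_def using N by simp
  have error_eq: "(\<Sum>i<N. s (ys i)) / real N - gibbs_mean Y s \<theta> = T ys / real N" for ys
    unfolding T_def using N by (simp add: sum_subtractf field_simps)
  have "(\<Sum>ys\<in>samples Y N. P ys * \<bar>(\<Sum>i<N. s (ys i)) / real N - gibbs_mean Y s \<theta>\<bar>)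
      \<le> (\<Sum>ys\<in>samples Y N. P ys * ((T ys / real N)\<^sup>2 / (2 * c) + c / 2))"
    unfolding error_eq P_def
    by (intro sum_mono mult_left_mono abs_le_square_div_plus c sample_prob_nonneg)
  also have "\<dots> = (\<Sum>ys\<in>samples Y N. P ys * (T ys)\<^sup>2) / (real N ^ 2 * (2 * c))
      + c / 2 * (\<Sum>ys\<in>samples Y N. P ys)"
    by (simp add: sum_distrib_left sum_distrib_right sum.distrib power_divide algebra_simps
        sum_divide_distrib)
  also have "\<dots> = (gibbs_var \<theta> + 1) / (2 * sqrt (real N))"
  proof -
    have "sqrt (real N) * sqrt (real N) = real N" using N by simp
    then show ?thesis
      unfolding P_def T_def c_def sum_sample_prob sum_sample_prob_centered_sum_square
      using N by (simp add: field_simps power2_eq_square)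
  qed
  also have "\<dots> \<le> (4 * s_bound\<^sup>2 + 1) / (2 * sqrt (real N))"
    using gibbs_var_le[of \<theta>] N by (intro divide_right_mono) auto
  finally show ?thesis unfolding P_def .
qed

end

section \<open>The exact and the noisy Langevin kernels\<close>

locale langevin_setting = gibbs_model +
  fixes y :: 'a and \<sigma>0 \<Sigma> :: real
  assumes y_in_Y: "y \<in> Y" and \<sigma>0_pos: "0 < \<sigma>0" and \<Sigma>_pos: "0 < \<Sigma>" and \<Sigma>_less: "\<Sigma> < \<sigma>0\<^sup>2"
begin

definition contraction :: real where
  "contraction = 1 - \<Sigma> / (2 * \<sigma>0\<^sup>2)"

definition exact_mean :: "real \<Rightarrow> real" where
  "exact_mean \<theta> = \<theta> + \<Sigma> / 2 * grad_log_post Y s y \<sigma>0 \<theta>"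

definition noisy_mean :: "nat \<Rightarrow> (nat \<Rightarrow> 'a) \<Rightarrow> real \<Rightarrow> real" where
  "noisy_mean N ys \<theta> = \<theta> + \<Sigma> / 2 * (- \<theta> / \<sigma>0\<^sup>2 + s y - (\<Sum>i<N. s (ys i)) / real N)"

definition exact_density :: "real \<Rightarrow> real \<Rightarrow> real" where
  "exact_density \<theta> t = normal_density (exact_mean \<theta>) (sqrt \<Sigma>) t"

definition noisy_density :: "nat \<Rightarrow> real \<Rightarrow> real \<Rightarrow> real" where
  "noisy_density N = gaussian_mixture (samples Y N) (sample_prob Y s N) (noisy_mean N) \<Sigma>"

lemma langevin_kernel_eq: "langevin_kernel Y s y \<sigma>0 \<Sigma> = kernel_of_density exact_density"
  by (simp add: fun_eq_iff langevin_kernel_def kernel_of_density_def exact_density_def exact_mean_def)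

lemma noisy_langevin_kernel_eq:
  "noisy_langevin_kernel Y s y \<sigma>0 \<Sigma> N = kernel_of_density (noisy_density N)"
  by (simp add: fun_eq_iff noisy_langevin_kernel_def kernel_of_density_def noisy_density_def
      gaussian_mixture_def samples_def sample_prob_def noisy_mean_def)

lemma exact_density_eq_mixture:
  "exact_density = gaussian_mixture (UNIV :: unit set) (\<lambda>_ _. 1) (\<lambda>_. exact_mean) \<Sigma>"
  by (simp add: fun_eq_iff exact_density_def gaussian_mixture_def)

lemma contraction: "0 \<le> contraction" "contraction < 1"
proof -
  have "0 < \<sigma>0\<^sup>2" using \<sigma>0_pos by simp
  then have "0 < \<Sigma> / (2 * \<sigma>0\<^sup>2)" "\<Sigma> / (2 * \<sigma>0\<^sup>2) < 1"
    using \<Sigma>_pos \<Sigma>_less by (simp_all add: divide_less_eq)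
  then show "0 \<le> contraction" "contraction < 1" unfolding contraction_def by auto
qed

lemma abs_exact_mean_minus_contraction_le:
  "\<bar>exact_mean \<theta> - contraction * \<theta>\<bar> \<le> \<Sigma> * s_bound"
proof -
  have "exact_mean \<theta> - contraction * \<theta> = \<Sigma> / 2 * (s y - gibbs_mean Y s \<theta>)"
    unfolding exact_mean_def contraction_def grad_log_post_def using \<sigma>0_pos by (simp add: field_simps)
  then have "\<bar>exact_mean \<theta> - contraction * \<theta>\<bar> = \<Sigma> / 2 * \<bar>s y - gibbs_mean Y s \<theta>\<bar>"
    using \<Sigma>_pos by (simp only: abs_mult)
  also have "\<dots> \<le> \<Sigma> / 2 * (2 * s_bound)"
    using abs_triangle_ineq4[of "s y" "gibbs_mean Y s \<theta>"] abs_s_le_s_bound[OF y_in_Y]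
      abs_gibbs_mean_le[of \<theta>] \<Sigma>_pos
    by (intro mult_left_mono) auto
  finally show ?thesis by simp
qed

lemma abs_noisy_mean_minus_contraction_le:
  assumes "ys \<in> samples Y N"
  shows "\<bar>noisy_mean N ys \<theta> - contraction * \<theta>\<bar> \<le> \<Sigma> * s_bound"
proof -
  have "noisy_mean N ys \<theta> - contraction * \<theta> = \<Sigma> / 2 * (s y - (\<Sum>i<N. s (ys i)) / real N)"
    unfolding noisy_mean_def contraction_def using \<sigma>0_pos by (simp add: field_simps)
  then have "\<bar>noisy_mean N ys \<theta> - contraction * \<theta>\<bar> = \<Sigma> / 2 * \<bar>s y - (\<Sum>i<N. s (ys i)) / real N\<bar>"
    using \<Sigma>_pos by (simp only: abs_mult)
  also have "\<dots> \<le> \<Sigma> / 2 * (2 * s_bound)"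
    using abs_triangle_ineq4[of "s y" "(\<Sum>i<N. s (ys i)) / real N"] abs_s_le_s_bound[OF y_in_Y]
      abs_sample_mean_le[OF assms] \<Sigma>_pos
    by (intro mult_left_mono) auto
  finally show ?thesis by simp
qed

lemma abs_noisy_mean_minus_exact_mean:
  "\<bar>noisy_mean N ys \<theta> - exact_mean \<theta>\<bar> = \<Sigma> / 2 * \<bar>(\<Sum>i<N. s (ys i)) / real N - gibbs_mean Y s \<theta>\<bar>"
proof -
  have "noisy_mean N ys \<theta> - exact_mean \<theta> = \<Sigma> / 2 * (gibbs_mean Y s \<theta> - (\<Sum>i<N. s (ys i)) / real N)"
    unfolding noisy_mean_def exact_mean_def grad_log_post_def by (simp add: algebra_simps)
  then have "\<bar>noisy_mean N ys \<theta> - exact_mean \<theta>\<bar>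
      = \<bar>\<Sigma> / 2\<bar> * \<bar>gibbs_mean Y s \<theta> - (\<Sum>i<N. s (ys i)) / real N\<bar>"
    by (simp only: abs_mult)
  then show ?thesis using \<Sigma>_pos by (simp add: abs_minus_commute)
qed

lemma exact_mean_measurable[measurable]: "exact_mean \<in> borel_measurable borel"
  unfolding exact_mean_def grad_log_post_def by measurable

lemma noisy_mean_measurable[measurable]: "noisy_mean N ys \<in> borel_measurable borel"
  unfolding noisy_mean_def by measurable

lemma gaussian_mixture_family_exact:
  "gaussian_mixture_family (UNIV :: unit set) (\<lambda>_ _. 1) (\<lambda>_. exact_mean) \<Sigma>"
  by (rule gaussian_mixture_family.intro) (simp_all add: \<Sigma>_pos)

lemma gaussian_mixture_family_noisy:
  "gaussian_mixture_family (samples Y N) (sample_prob Y s N) (noisy_mean N) \<Sigma>"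
  by (rule gaussian_mixture_family.intro)
    (simp_all add: \<Sigma>_pos finite_samples sample_prob_nonneg sum_sample_prob)

sublocale bounds: gaussian_mixture_bounds contraction "\<Sigma> * s_bound" \<Sigma>
  by (rule gaussian_mixture_bounds.intro)
    (simp_all add: contraction \<Sigma>_pos less_imp_le s_bound_nonneg)

lemma drift_minorization_exact:
  "drift_minorization_kernel exact_density bounds.mix_drift_rate bounds.mix_drift_const
     bounds.mix_small_set bounds.mix_minorization_const bounds.mix_minorization_density"
  unfolding exact_density_eq_mixture
  by (rule bounds.drift_minorization_kernel_gaussian_mixture[OF gaussian_mixture_family_exact
        abs_exact_mean_minus_contraction_le])

lemma drift_minorization_noisy:
  "drift_minorization_kernel (noisy_density N) bounds.mix_drift_rate bounds.mix_drift_const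
     bounds.mix_small_set bounds.mix_minorization_const bounds.mix_minorization_density"
  unfolding noisy_density_def
  by (rule bounds.drift_minorization_kernel_gaussian_mixture[OF gaussian_mixture_family_noisy
        abs_noisy_mean_minus_contraction_le])

lemma abs_noisy_mean_minus_exact_mean_le:
  assumes "ys \<in> samples Y N"
  shows "\<bar>noisy_mean N ys \<theta> - exact_mean \<theta>\<bar> \<le> \<Sigma> * s_bound"
proof -
  have "\<bar>(\<Sum>i<N. s (ys i)) / real N - gibbs_mean Y s \<theta>\<bar> \<le> 2 * s_bound"
    using abs_triangle_ineq4[of "(\<Sum>i<N. s (ys i)) / real N" "gibbs_mean Y s \<theta>"]
      abs_sample_mean_le[OF assms] abs_gibbs_mean_le[of \<theta>]
    by linarith
  then show ?thesis using \<Sigma>_pos by (simp add: abs_noisy_mean_minus_exact_mean)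
qed

definition perturbation_const :: real where
  "perturbation_const = normal_shift_const (\<Sigma> * s_bound) \<Sigma> * (\<Sigma> / 2) * ((4 * s_bound\<^sup>2 + 1) / 2)"

lemma abs_kernel_op_noisy_minus_exact_le:
  assumes N: "1 \<le> N" and \<psi>: "bounded_borel 1 \<psi>"
  shows "\<bar>kernel_op (noisy_density N) \<psi> \<theta> - kernel_op exact_density \<psi> \<theta>\<bar>
    \<le> perturbation_const / sqrt (real N)"
proof -
  define L where "L = normal_shift_const (\<Sigma> * s_bound) \<Sigma>"
  have "0 \<le> L"
    unfolding L_def using \<Sigma>_pos s_bound_nonneg by (intro normal_shift_const_nonneg) auto
  have "\<bar>kernel_op (noisy_density N) \<psi> \<theta> - kernel_op exact_density \<psi> \<theta>\<bar>
      \<le> L * (\<Sum>ys\<in>samples Y N. sample_prob Y s N ys \<theta> * \<bar>noisy_mean N ys \<theta> - exact_mean \<theta>\<bar>)"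
    unfolding kernel_op_def noisy_density_def exact_density_def gaussian_mixture_def L_def
    using finite_samples sample_prob_nonneg sum_sample_prob \<psi> \<Sigma>_pos
      abs_integral_normal_density_shift_le[OF \<Sigma>_pos abs_noisy_mean_minus_exact_mean_le \<psi>]
    by (intro abs_integral_mixture_minus_normal_le) auto
  also have "\<dots> = L * (\<Sigma> / 2 * (\<Sum>ys\<in>samples Y N. sample_prob Y s N ys \<theta>
      * \<bar>(\<Sum>i<N. s (ys i)) / real N - gibbs_mean Y s \<theta>\<bar>))"
    by (simp add: abs_noisy_mean_minus_exact_mean sum_distrib_left algebra_simps)
  also have "\<dots> \<le> L * (\<Sigma> / 2 * ((4 * s_bound\<^sup>2 + 1) / (2 * sqrt (real N))))"
    using sum_sample_prob_abs_sample_mean_error_le[OF N, of \<theta>] \<Sigma>_pos \<open>0 \<le> L\<close>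
    by (intro mult_left_mono) auto
  finally show ?thesis unfolding perturbation_const_def L_def by simp
qed

sublocale exact: drift_minorization_kernel exact_density bounds.mix_drift_rate bounds.mix_drift_const
    bounds.mix_small_set bounds.mix_minorization_const bounds.mix_minorization_density
  by (rule drift_minorization_exact)

definition noisy_stationary :: "nat \<Rightarrow> real measure" where
  "noisy_stationary N = drift_minorization_kernel.stationary_measure (noisy_density N)"

lemma geom_ergodic_to_langevin_kernel:
  "geom_ergodic_to (langevin_kernel Y s y \<sigma>0 \<Sigma>) exact.stationary_measure"
  unfolding langevin_kernel_eq by (rule exact.geom_ergodic_to_stationary_measure)

lemma geom_ergodic_to_noisy_langevin_kernel:
  "geom_ergodic_to (noisy_langevin_kernel Y s y \<sigma>0 \<Sigma> N) (noisy_stationary N)"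
  unfolding noisy_langevin_kernel_eq noisy_stationary_def
  by (rule drift_minorization_kernel.geom_ergodic_to_stationary_measure[OF drift_minorization_noisy])

lemma tendsto_tv_dist_noisy_stationary:
  "(\<lambda>N. tv_dist exact.stationary_measure (noisy_stationary N)) \<longlonglongrightarrow> 0"
proof (rule tendsto_zero_of_le_power_plus_linear)
  show "0 \<le> tv_dist exact.stationary_measure (noisy_stationary N)" for N
    unfolding noisy_stationary_def
    using exact.prob_space_stationary_measure
      drift_minorization_kernel.prob_space_stationary_measure[OF drift_minorization_noisy]
    by (rule tv_dist_nonneg)
  show "tv_dist exact.stationary_measure (noisy_stationary N)
      \<le> 2 * exact.ergodicity_const 0 * exact.rate ^ n + real n * (perturbation_const / sqrt (real N))"
    if "1 \<le> N" for N n
    unfolding noisy_stationary_def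
    using drift_minorization_noisy abs_kernel_op_noisy_minus_exact_le[OF that]
    by (rule exact.tv_dist_stationary_measure_le)
  show "(\<lambda>n. 2 * exact.ergodicity_const 0 * exact.rate ^ n) \<longlonglongrightarrow> 0"
    by (simp add: exact.tendsto_ergodicity_const_rate_power mult.assoc)
qed (rule tendsto_const_div_sqrt)

end

theorem theorem4:
  fixes Y :: "'a set" and s :: "'a \<Rightarrow> real" and y :: 'a
    and \<sigma>0 \<Sigma> :: real
  assumes "finite Y" and "y \<in> Y"
    and "\<sigma>0 > 0" and "\<Sigma> > 0" and "\<Sigma> < \<sigma>0\<^sup>2"
  shows "\<exists>\<pi>\<Sigma>. geom_ergodic_to (langevin_kernel Y s y \<sigma>0 \<Sigma>) \<pi>\<Sigma> \<and>
           (\<exists>\<pi>N :: nat \<Rightarrow> real measure. \<exists>N0 \<ge> 1.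
              (\<forall>N \<ge> N0. geom_ergodic_to (noisy_langevin_kernel Y s y \<sigma>0 \<Sigma> N) (\<pi>N N)) \<and>
              (\<lambda>N. tv_dist \<pi>\<Sigma> (\<pi>N N)) \<longlonglongrightarrow> 0)"
proof -
  interpret langevin_setting Y s y \<sigma>0 \<Sigma> using assms by unfold_locales auto
  show ?thesis
    by (intro exI[of _ exact.stationary_measure] conjI exI[of _ noisy_stationary] exI[of _ "1::nat"]
        order.refl allI impI geom_ergodic_to_langevin_kernel geom_ergodic_to_noisy_langevin_kernel
        tendsto_tv_dist_noisy_stationary)
qed

end
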